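(* Consider the plant $\dot x=Ax+Bu+Ep(q)+E_ww$, $y=Cx+Du$, $q=C_qx$ (i.e. no measurement noise, $F_w=\mathbf 0$), where $p$ is globally Lipschitz continuous and the disturbance satisfies $\|w\|_\infty\le\omega_0$ for an arbitrary given $\omega_0>0$. Suppose there exist $\alpha_0>0$, $\mu>0$, a symmetric $P>0$ in $\mathbb{R}^{2n_x\times2n_x}$ and matrices $K_1,K_2,L_1,L_2$ such that, for the continuous-time closed-loop system formed by the plant, the observer $\dot{\hat x}=A\hat x+Bu+Ep(\hat q+L_1(\hat y-y))+L_2(\hat y-y)$, $\hat y=C\hat x+Du$, $\hat q=C_q\hat x$, and the controller $u=K_1\hat x+K_2p(C_q\hat x)$, the function $V(z)=z^\top Pz$ with $z=(x^\top,(x-\hat x)^\top)^\top$ satisfies $\dot V\le-\alpha_0V$ along its trajectories when $w\equiv0$. Now consider the event-triggered implementation: the same observer (driven by the actually applied input $u$), triggering times $t_0=0<t_1<t_2<\cdots$, $\hat x_s(t)=\hat x(t_k)$ for $t\in[t_k,t_{k+1})$, input $u(t)=K_1\hat x_s(t)+K_2p(C_q\hat x_s(t))$, and the triggering rule $t_{k+1}=\inf\{t\mid t\ge t_k+\tau,\ \|\hat x_s(t)-\hat x(t)\|>\sigma\|\hat x(t)\|+\epsilon\}$. Then positive numbers $\tau,\sigma,\epsilon$ can be chosen such that this event-triggered closed-loop system is input-to-state practically stable with respect to $w$.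
   Context: Plant: $x\in\mathbb{R}^{n_x}$ state, $u\in\mathbb{R}^{n_u}$ input, $y\in\mathbb{R}^{n_y}$ output, $w\in\mathbb{R}^{n_w}$ unknown measurable disturbance; $A,B,C,D,C_q,E,E_w$ constant real matrices of compatible sizes; $p:\mathbb{R}^{n_q}\to\mathbb{R}^{n_p}$ known with $p(0)=0$. The closed loop is input-to-state practically stable (ISpS) w.r.t. $w$ if there exist $\beta_1\in\mathcal{KL}$, $\beta_2\in\mathcal K$ and a constant $d\ge0$ such that for every initial condition $(x(0),\hat x(0))$ and every admissible disturbance $w$, $\|z(t)\|\le\beta_1(\|z(0)\|,t)+\beta_2(\|w\|_\infty)+d$ for all $t\ge0$, where $z=(x^\top,(x-\hat x)^\top)^\top$ and $\|w\|_\infty=\sup_{t\ge0}\|w(t)\|$. *)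

theory Defs
  imports "HOL-Analysis.Analysis"
begin

definition class_K :: "(real \<Rightarrow> real) \<Rightarrow> bool" where
  "class_K \<gamma> \<longleftrightarrow> continuous_on {0..} \<gamma> \<and> strict_mono_on {0..} \<gamma> \<and> \<gamma> 0 = 0"

definition class_KL :: "(real \<Rightarrow> real \<Rightarrow> real) \<Rightarrow> bool" where
  "class_KL \<beta> \<longleftrightarrow>
     (\<forall>t\<ge>0. class_K (\<lambda>r. \<beta> r t)) \<and>
     (\<forall>r\<ge>0. (\<forall>s t. 0 \<le> s \<longrightarrow> s \<le> t \<longrightarrow> \<beta> r t \<le> \<beta> r s) \<and> ((\<beta> r) \<longlongrightarrow> 0) at_top)"

definition stack :: "real^'n \<Rightarrow> real^'n \<Rightarrow> real^('n + 'n)" where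
  "stack a b = (\<chi> i. case i of Inl j \<Rightarrow> a $ j | Inr j \<Rightarrow> b $ j)"

definition ctrl_input ::
  "real^'x^'u \<Rightarrow> real^'p^'u \<Rightarrow> real^'x^'q \<Rightarrow> (real^'q \<Rightarrow> real^'p) \<Rightarrow> real^'x \<Rightarrow> real^'u" where
  "ctrl_input K1 K2 Cq p xs = K1 *v xs + K2 *v p (Cq *v xs)"

definition plant_rhs ::
  "real^'x^'x \<Rightarrow> real^'u^'x \<Rightarrow> real^'p^'x \<Rightarrow> real^'w^'x \<Rightarrow> real^'x^'q \<Rightarrow> (real^'q \<Rightarrow> real^'p)
   \<Rightarrow> real^'x \<Rightarrow> real^'u \<Rightarrow> real^'w \<Rightarrow> real^'x" where
  "plant_rhs A B E Ew Cq p x u w = A *v x + B *v u + E *v p (Cq *v x) + Ew *v w"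

definition obs_rhs ::
  "real^'x^'x \<Rightarrow> real^'u^'x \<Rightarrow> real^'x^'y \<Rightarrow> real^'u^'y \<Rightarrow> real^'x^'q \<Rightarrow> real^'p^'x
   \<Rightarrow> (real^'q \<Rightarrow> real^'p) \<Rightarrow> real^'y^'q \<Rightarrow> real^'y^'x
   \<Rightarrow> real^'x \<Rightarrow> real^'x \<Rightarrow> real^'u \<Rightarrow> real^'x" where
  "obs_rhs A B C D Cq E p L1 L2 x xh u =
     (let y = C *v x + D *v u; yh = C *v xh + D *v u
      in A *v xh + B *v u + E *v p (Cq *v xh + L1 *v (yh - y)) + L2 *v (yh - y))"

text \<open>A (Caratheodory) solution on \<open>[0,\<infinity>)\<close> of the event-triggered closed loop.
  Triggering times are extended reals: \<open>tk (Suc k) = \<infinity>\<close> means no further event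
  (infimum of the empty set).  \<open>xs\<close> is the held observer state, \<open>w\<close> an admissible disturbance.\<close>

definition et_solution ::
  "real^'x^'x \<Rightarrow> real^'u^'x \<Rightarrow> real^'x^'y \<Rightarrow> real^'u^'y \<Rightarrow> real^'x^'q \<Rightarrow> real^'p^'x \<Rightarrow> real^'w^'x
   \<Rightarrow> (real^'q \<Rightarrow> real^'p) \<Rightarrow> real^'x^'u \<Rightarrow> real^'p^'u \<Rightarrow> real^'y^'q \<Rightarrow> real^'y^'x
   \<Rightarrow> real \<Rightarrow> real \<Rightarrow> real \<Rightarrow> real
   \<Rightarrow> (real \<Rightarrow> real^'x) \<Rightarrow> (real \<Rightarrow> real^'x) \<Rightarrow> (real \<Rightarrow> real^'x) \<Rightarrow> (nat \<Rightarrow> ereal) \<Rightarrow> (real \<Rightarrow> real^'w)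
   \<Rightarrow> bool" where
  "et_solution A B C D Cq E Ew p K1 K2 L1 L2 \<tau> \<sigma> \<epsilon> \<omega>0 x xh xs tk w \<longleftrightarrow>
     w \<in> borel_measurable (lebesgue_on {0..}) \<and> (\<forall>s\<ge>0. norm (w s) \<le> \<omega>0) \<and>
     tk 0 = 0 \<and>
     (\<forall>k. tk (Suc k) = Inf {ereal s | s. tk k + ereal \<tau> \<le> ereal s \<and>
             norm (xh (real_of_ereal (tk k)) - xh s) > \<sigma> * norm (xh s) + \<epsilon>}) \<and>
     (\<forall>k s. tk k \<le> ereal s \<and> ereal s < tk (Suc k) \<longrightarrow> xs s = xh (real_of_ereal (tk k))) \<and>
     continuous_on {0..} x \<and> continuous_on {0..} xh \<and>
     (\<forall>t\<ge>0. ((\<lambda>s. plant_rhs A B E Ew Cq p (x s) (ctrl_input K1 K2 Cq p (xs s)) (w s))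
                 has_integral (x t - x 0)) {0..t}) \<and>
     (\<forall>t\<ge>0. ((\<lambda>s. obs_rhs A B C D Cq E p L1 L2 (x s) (xh s) (ctrl_input K1 K2 Cq p (xs s)))
                 has_integral (xh t - xh 0)) {0..t})"

end

theory Submission
  imports Defs
begin

(* V(z) = z' P z, the Lyapunov function of the continuously implemented loop, is also used for
   the event-triggered loop.  While the held state xs is constant, the actual vector field differs
   from the nominal one only by Lipschitz terms in the sampling error xs - xh, the disturbance and
   the motion of z, so the upper right Dini derivative of V is at most
   -alpha V + 2 M |z| (3 L^2 |xs - xh| + 2 L omega).  After the dwell time tau the triggering rule
   gives |xs - xh| <= sigma |xh| + eps; within the dwell time, integrating the rates over an interval
   of length at most tau gives |xs - xh| <= theta |z| + omega.  For sigma and tau small compared with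
   alpha, the part proportional to |z| is absorbed by half of the dissipation, leaving
   D+V <= -alpha/2 V + c (eps + omega)^2.  A comparison argument for Dini derivatives yields
   exponential decay of V up to an offset of order (eps + omega)^2, which is the ISpS estimate.
   The dwell time also guarantees that the sampling intervals cover [0, oo). *)

section \<open>Stacked vectors, matrix norms and quadratic forms\<close>

lemma stack_nth [simp]: "stack a b $ Inl i = a $ i" "stack a b $ Inr i = b $ i"
  by (simp_all add: stack_def)

lemma vec_sum_eqI:
  "(\<And>i. u $ Inl i = v $ Inl i) \<Longrightarrow> (\<And>i. u $ Inr i = v $ Inr i) \<Longrightarrow> u = v"
  by (metis vec_eq_iff sum.exhaust)

lemma stack_add: "stack a b + stack c d = stack (a + c) (b + d)"
  by (rule vec_sum_eqI) simp_all

lemma stack_diff: "stack a b - stack c d = stack (a - c) (b - d)"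
  by (rule vec_sum_eqI) simp_all

lemma inner_stack: "stack a b \<bullet> stack c d = a \<bullet> c + b \<bullet> d"
proof -
  have "stack a b \<bullet> stack c d = (\<Sum>i\<in>range Inl \<union> range Inr. stack a b $ i * stack c d $ i)"
    unfolding inner_vec_def by (simp add: UNIV_sum)
  also have "\<dots> = (\<Sum>i\<in>range Inl. stack a b $ i * stack c d $ i)
                 + (\<Sum>i\<in>range Inr. stack a b $ i * stack c d $ i)"
    by (rule sum.union_disjoint) auto
  also have "\<dots> = a \<bullet> c + b \<bullet> d"
    by (simp add: sum.reindex inner_vec_def)
  finally show ?thesis .
qed

lemma norm_stack_squared: "(norm (stack a b))\<^sup>2 = (norm a)\<^sup>2 + (norm b)\<^sup>2"
  by (simp only: power2_norm_eq_inner inner_stack)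

lemma norm_le_norm_stack1: "norm a \<le> norm (stack a b)"
  by (rule power2_le_imp_le) (simp_all add: norm_stack_squared)

lemma norm_le_norm_stack2: "norm b \<le> norm (stack a b)"
  by (rule power2_le_imp_le) (simp_all add: norm_stack_squared)

lemma norm_stack_le: "norm (stack a b) \<le> norm a + norm b"
  by (rule power2_le_imp_le) (simp_all add: norm_stack_squared power2_sum)

lemma bounded_linear_stack1: "bounded_linear (\<lambda>a. stack a 0)"
  by (rule linear_conv_bounded_linear[THEN iffD1], rule linearI; rule vec_sum_eqI) simp_all

lemma bounded_linear_stack2: "bounded_linear (\<lambda>b. stack 0 b)"
  by (rule linear_conv_bounded_linear[THEN iffD1], rule linearI; rule vec_sum_eqI) simp_all

lemma has_integral_stack:
  assumes "(f has_integral I) S" "(g has_integral J) S"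
  shows "((\<lambda>s. stack (f s) (g s)) has_integral stack I J) S"
  using has_integral_add[OF has_integral_linear[OF assms(1) bounded_linear_stack1]
      has_integral_linear[OF assms(2) bounded_linear_stack2]]
  by (simp add: o_def stack_add)

lemma continuous_on_stack:
  fixes f g :: "'a::topological_space \<Rightarrow> real^'n"
  assumes "continuous_on S f" "continuous_on S g"
  shows "continuous_on S (\<lambda>t. stack (f t) (g t))"
proof -
  have "continuous_on S (\<lambda>t. stack (f t) 0)" "continuous_on S (\<lambda>t. stack 0 (g t))"
    using bounded_linear.continuous_on[OF bounded_linear_stack1 assms(1)]
      bounded_linear.continuous_on[OF bounded_linear_stack2 assms(2)] .
  from continuous_on_add[OF this] show ?thesis by (simp add: stack_add)
qed

abbreviation matrix_opnorm :: "real^'n^'m \<Rightarrow> real" where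
  "matrix_opnorm M \<equiv> onorm ((*v) M)"

lemma norm_matrix_vector_le:
  fixes M :: "real^'n^'m"
  shows "norm (M *v v) \<le> matrix_opnorm M * norm v"
  by (rule onorm[OF matrix_vector_mul_bounded_linear])

lemma matrix_opnorm_nonneg:
  fixes M :: "real^'n^'m"
  shows "0 \<le> matrix_opnorm M"
  by (rule onorm_pos_le[OF matrix_vector_mul_bounded_linear])

lemma norm_matrix_vector_diff_le:
  fixes M :: "real^'n^'m"
  shows "norm (M *v a - M *v b) \<le> matrix_opnorm M * norm (a - b)"
  using norm_matrix_vector_le[of M "a - b"] by (simp add: matrix_vector_mult_diff_distrib)

lemma norm_matrix_vector_comp_diff_le:
  fixes M :: "real^'n^'m" and N :: "real^'k^'n"
  shows "norm (M *v (N *v a) - M *v (N *v b)) \<le> matrix_opnorm M * matrix_opnorm N * norm (a - b)"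
proof -
  have "norm (M *v (N *v a) - M *v (N *v b)) \<le> matrix_opnorm M * norm (N *v a - N *v b)"
    by (rule norm_matrix_vector_diff_le)
  also have "\<dots> \<le> matrix_opnorm M * (matrix_opnorm N * norm (a - b))"
    by (intro mult_left_mono norm_matrix_vector_diff_le matrix_opnorm_nonneg)
  finally show ?thesis by (simp add: mult.assoc)
qed

lemma inner_matrix_vector_commute:
  fixes P :: "real^'n^'n"
  assumes "transpose P = P"
  shows "a \<bullet> (P *v b) = b \<bullet> (P *v a)"
proof -
  have "a \<bullet> (P *v b) = (a v* P) \<bullet> b" by (simp add: dot_lmul_matrix)
  also have "a v* P = P *v a" using vector_transpose_matrix[of a P] assms by simp
  finally show ?thesis by (simp add: inner_commute)
qed

lemma quadratic_form_diff:
  fixes P :: "real^'n^'n"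
  assumes "transpose P = P"
  shows "b \<bullet> (P *v b) - a \<bullet> (P *v a) = (b - a) \<bullet> (P *v (b + a))"
  using inner_matrix_vector_commute[OF assms, of a b]
  by (simp add: matrix_vector_right_distrib inner_diff_left inner_add_right)

lemma quadratic_form_coercive:
  fixes P :: "real^'n^'n"
  assumes "\<forall>z. z \<noteq> 0 \<longrightarrow> z \<bullet> (P *v z) > 0"
  shows "\<exists>m>0. \<forall>z. m * (norm z)\<^sup>2 \<le> z \<bullet> (P *v z)"
proof -
  have cont: "continuous_on (sphere 0 1) (\<lambda>z. z \<bullet> (P *v z))"
    by (intro continuous_intros linear_continuous_on matrix_vector_mul_bounded_linear)
  obtain u where u: "u \<in> sphere 0 1"
    and umin: "\<forall>z\<in>sphere 0 1. u \<bullet> (P *v u) \<le> z \<bullet> (P *v z)"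
    using continuous_attains_inf[OF compact_sphere _ cont] by fastforce
  have "u \<noteq> 0" using u by auto
  then have "u \<bullet> (P *v u) > 0" using assms by blast
  moreover have "u \<bullet> (P *v u) * (norm z)\<^sup>2 \<le> z \<bullet> (P *v z)" for z
  proof (cases "z = 0")
    case False
    let ?v = "(1 / norm z) *\<^sub>R z"
    have "?v \<in> sphere 0 1" using False by simp
    then have "u \<bullet> (P *v u) \<le> ?v \<bullet> (P *v ?v)" using umin by blast
    also have "?v \<bullet> (P *v ?v) = (z \<bullet> (P *v z)) / (norm z)\<^sup>2"
      by (simp add: matrix_vector_mult_scaleR power2_eq_square)
    finally show ?thesis using False by (simp add: pos_le_divide_eq)
  qed simp
  ultimately show ?thesis by blast
qed

section \<open>Upper right Dini derivatives and a comparison principle\<close>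

definition upper_right_dini_le :: "(real \<Rightarrow> real) \<Rightarrow> real \<Rightarrow> real \<Rightarrow> bool" where
  "upper_right_dini_le F t D \<longleftrightarrow>
     (\<forall>\<eta>>0. \<exists>\<delta>>0. \<forall>h. 0 < h \<longrightarrow> h < \<delta> \<longrightarrow> F (t + h) \<le> F t + h * (D + \<eta>))"

lemma upper_right_dini_le_mono:
  assumes "upper_right_dini_le F t D" "D \<le> D'"
  shows "upper_right_dini_le F t D'"
  unfolding upper_right_dini_le_def
proof (intro allI impI)
  fix \<eta> :: real assume "\<eta> > 0"
  then obtain \<delta> where \<delta>: "\<delta> > 0" "\<forall>h. 0 < h \<longrightarrow> h < \<delta> \<longrightarrow> F (t + h) \<le> F t + h * (D + \<eta>)"
    using assms(1) unfolding upper_right_dini_le_def by blast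
  show "\<exists>\<delta>>0. \<forall>h. 0 < h \<longrightarrow> h < \<delta> \<longrightarrow> F (t + h) \<le> F t + h * (D' + \<eta>)"
  proof (intro exI[of _ \<delta>] conjI allI impI)
    fix h :: real assume h: "0 < h" "h < \<delta>"
    then have "F (t + h) \<le> F t + h * (D + \<eta>)" using \<delta>(2) by blast
    also have "\<dots> \<le> F t + h * (D' + \<eta>)" using h assms(2) by (intro add_left_mono mult_left_mono) auto
    finally show "F (t + h) \<le> F t + h * (D' + \<eta>)" .
  qed fact
qed

lemma nonincreasing_if_upper_right_dini_nonpos:
  fixes F :: "real \<Rightarrow> real"
  assumes ab: "a \<le> b" and cont: "continuous_on {a..b} F"
    and dini: "\<forall>t\<in>{a..<b}. upper_right_dini_le F t 0"
  shows "F b \<le> F a"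
proof -
  have slope: "F b \<le> F a + \<eta> * (b - a)" if "\<eta> > 0" for \<eta>
  proof -
    define S where "S = {s \<in> {a..b}. F s \<le> F a + \<eta> * (s - a)}"
    have "closed S" unfolding S_def
      by (rule continuous_on_closed_Collect_le[OF cont]) (auto intro!: continuous_intros)
    moreover have "a \<in> S" using ab by (simp add: S_def)
    moreover have bdd: "bdd_above S" unfolding S_def by (rule bdd_aboveI[of _ b]) auto
    ultimately have supS: "Sup S \<in> S" using closed_contains_Sup by blast
    have "Sup S = b"
    proof (rule ccontr)
      assume "Sup S \<noteq> b"
      with supS have s: "Sup S < b" "a \<le> Sup S" by (auto simp: S_def)
      then obtain \<delta> where \<delta>: "\<delta> > 0"
        "\<forall>h. 0 < h \<longrightarrow> h < \<delta> \<longrightarrow> F (Sup S + h) \<le> F (Sup S) + h * (0 + \<eta>)"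
        using dini \<open>\<eta> > 0\<close> unfolding upper_right_dini_le_def by force
      define h where "h = min (\<delta> / 2) ((b - Sup S) / 2)"
      have "h \<le> \<delta> / 2" "h \<le> (b - Sup S) / 2" "0 < h" using \<delta> s by (auto simp: h_def min_def)
      then have h: "0 < h" "h < \<delta>" "Sup S + h \<le> b" using \<delta> by auto
      have "F (Sup S + h) \<le> F (Sup S) + h * (0 + \<eta>)" using \<delta>(2) h by blast
      moreover have "F (Sup S) \<le> F a + \<eta> * (Sup S - a)" using supS by (simp add: S_def)
      moreover have "\<eta> * (Sup S + h - a) = \<eta> * (Sup S - a) + h * (0 + \<eta>)"
        by (simp add: algebra_simps)
      ultimately have "Sup S + h \<in> S" using h s by (simp add: S_def)
      then have "Sup S + h \<le> Sup S" using bdd by (rule cSup_upper)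
      then show False using h by simp
    qed
    then show ?thesis using supS by (simp add: S_def)
  qed
  show ?thesis
  proof (rule field_le_epsilon)
    fix e :: real assume "e > 0"
    define \<eta> where "\<eta> = e / (b - a + 1)"
    have "\<eta> > 0" "\<eta> * (b - a + 1) = e" using \<open>e > 0\<close> ab by (simp_all add: \<eta>_def)
    then have "\<eta> * (b - a) \<le> e" by (simp add: algebra_simps)
    then show "F b \<le> F a + e" using slope[OF \<open>\<eta> > 0\<close>] by linarith
  qed
qed

lemma exp_mult_one_minus_le: "exp x * (1 - x) \<le> (1::real)"
proof -
  have "exp x * (1 - x) \<le> exp x * exp (- x)"
    using exp_ge_add_one_self[of "- x"] by (intro mult_left_mono) auto
  then show ?thesis by (simp add: exp_minus)
qed

text \<open>The positive part is needed: the estimate \<open>exp (\<rho> h) (1 - \<rho> h) \<le> 1\<close> only controls a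
  nonnegative excess over the equilibrium level \<open>c / \<rho>\<close>.\<close>

lemma upper_right_dini_exp_weighted_excess:
  fixes \<phi> :: "real \<Rightarrow> real"
  assumes \<rho>: "\<rho> > 0" and dini: "upper_right_dini_le \<phi> t (- \<rho> * \<phi> t + c)"
  shows "upper_right_dini_le (\<lambda>s. exp (\<rho> * s) * max (\<phi> s - c / \<rho>) 0) t 0"
  unfolding upper_right_dini_le_def
proof (intro allI impI)
  fix \<eta> :: real assume \<eta>: "\<eta> > 0"
  define \<eta>' where "\<eta>' = \<eta> / exp (\<rho> * (t + 1))"
  have \<eta>': "\<eta>' > 0" using \<eta> by (simp add: \<eta>'_def)
  obtain \<delta> where \<delta>: "\<delta> > 0"
    "\<forall>h. 0 < h \<longrightarrow> h < \<delta> \<longrightarrow> \<phi> (t + h) \<le> \<phi> t + h * (- \<rho> * \<phi> t + c + \<eta>')"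
    using dini \<eta>' unfolding upper_right_dini_le_def by blast
  define q where "q = \<phi> t - c / \<rho>"
  show "\<exists>\<delta>>0. \<forall>h. 0 < h \<longrightarrow> h < \<delta> \<longrightarrow>
      exp (\<rho> * (t + h)) * max (\<phi> (t + h) - c / \<rho>) 0 \<le> exp (\<rho> * t) * max (\<phi> t - c / \<rho>) 0 + h * (0 + \<eta>)"
  proof (intro exI[of _ "min \<delta> (min 1 (1 / \<rho>))"] conjI allI impI)
    show "0 < min \<delta> (min 1 (1 / \<rho>))" using \<delta> \<rho> by simp
    fix h :: real assume h: "0 < h" "h < min \<delta> (min 1 (1 / \<rho>))"
    have \<rho>h: "\<rho> * h \<le> 1" using h \<rho> by (simp add: field_simps)
    have "\<phi> t + h * (- \<rho> * \<phi> t + c + \<eta>') - c / \<rho> = q * (1 - \<rho> * h) + h * \<eta>'"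
      using \<rho> by (simp add: q_def field_simps)
    then have "\<phi> (t + h) - c / \<rho> \<le> q * (1 - \<rho> * h) + h * \<eta>'"
      using \<delta>(2) h by fastforce
    also have "q * (1 - \<rho> * h) \<le> max q 0 * (1 - \<rho> * h)"
      using \<rho>h by (intro mult_right_mono) auto
    finally have "max (\<phi> (t + h) - c / \<rho>) 0 \<le> max q 0 * (1 - \<rho> * h) + h * \<eta>'"
      using \<rho>h h \<eta>' by auto
    then have "exp (\<rho> * t) * exp (\<rho> * h) * max (\<phi> (t + h) - c / \<rho>) 0
        \<le> exp (\<rho> * t) * exp (\<rho> * h) * (max q 0 * (1 - \<rho> * h) + h * \<eta>')"
      by (rule mult_left_mono) simp
    then have "exp (\<rho> * (t + h)) * max (\<phi> (t + h) - c / \<rho>) 0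
        \<le> exp (\<rho> * t) * exp (\<rho> * h) * (max q 0 * (1 - \<rho> * h) + h * \<eta>')"
      by (simp add: distrib_left exp_add)
    also have "\<dots> = exp (\<rho> * t) * (max q 0 * (exp (\<rho> * h) * (1 - \<rho> * h)))
        + exp (\<rho> * t) * exp (\<rho> * h) * h * \<eta>'"
      by (simp add: algebra_simps)
    also have "\<dots> \<le> exp (\<rho> * t) * (max q 0 * 1) + exp (\<rho> * t) * exp \<rho> * h * \<eta>'"
      using h \<rho> \<eta>' exp_mult_one_minus_le[of "\<rho> * h"]
      by (intro add_mono mult_left_mono mult_right_mono) auto
    also have "exp (\<rho> * t) * exp \<rho> * h * \<eta>' = h * \<eta>"
      by (simp add: \<eta>'_def distrib_left exp_add)
    finally show "exp (\<rho> * (t + h)) * max (\<phi> (t + h) - c / \<rho>) 0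
        \<le> exp (\<rho> * t) * max (\<phi> t - c / \<rho>) 0 + h * (0 + \<eta>)"
      by (simp add: q_def)
  qed
qed

lemma dini_comparison:
  fixes \<phi> :: "real \<Rightarrow> real"
  assumes \<rho>: "\<rho> > 0" and ab: "a \<le> b" and cont: "continuous_on {a..b} \<phi>"
    and dini: "\<forall>t\<in>{a..<b}. upper_right_dini_le \<phi> t (- \<rho> * \<phi> t + c)"
  shows "\<phi> b \<le> exp (- \<rho> * (b - a)) * max (\<phi> a - c / \<rho>) 0 + c / \<rho>"
proof -
  let ?F = "\<lambda>s. exp (\<rho> * s) * max (\<phi> s - c / \<rho>) 0"
  have "continuous_on {a..b} ?F" by (intro continuous_intros cont)
  moreover have "\<forall>t\<in>{a..<b}. upper_right_dini_le ?F t 0"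
    using upper_right_dini_exp_weighted_excess[OF \<rho>] dini by blast
  ultimately have "?F b \<le> ?F a" by (rule nonincreasing_if_upper_right_dini_nonpos[OF ab])
  then have "exp (- \<rho> * b) * ?F b \<le> exp (- \<rho> * b) * ?F a" by (rule mult_left_mono) simp
  then have "max (\<phi> b - c / \<rho>) 0 \<le> exp (- \<rho> * b) * (exp (\<rho> * a) * max (\<phi> a - c / \<rho>) 0)"
    by (simp add: mult.assoc[symmetric] exp_add[symmetric])
  also have "\<dots> = exp (- \<rho> * (b - a)) * max (\<phi> a - c / \<rho>) 0"
    by (simp add: mult.assoc[symmetric] exp_add[symmetric] algebra_simps)
  finally show ?thesis by linarith
qed

section \<open>Event-triggered trajectories of a Lipschitz observer loop\<close>

locale lipschitz_observer_loop =
  fixes f :: "real^'x \<Rightarrow> 'u::real_normed_vector \<Rightarrow> 'w::real_normed_vector \<Rightarrow> real^'x"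
    and g :: "real^'x \<Rightarrow> real^'x \<Rightarrow> 'u \<Rightarrow> real^'x"
    and k :: "real^'x \<Rightarrow> 'u"
    and L :: real
  assumes L_ge_1: "1 \<le> L"
    and f_lipschitz: "norm (f x u w - f x' u' w') \<le> L * (norm (x - x') + norm (u - u') + norm (w - w'))"
    and g_lipschitz: "norm (g x xh u - g x' xh' u') \<le> L * (norm (x - x') + norm (xh - xh') + norm (u - u'))"
    and k_lipschitz: "norm (k a - k b) \<le> L * norm (a - b)"
    and f_zero: "f 0 0 0 = 0" and g_zero: "g 0 0 0 = 0" and k_zero: "k 0 = 0"
begin

lemma L_pos: "0 < L"
  using L_ge_1 by linarith

lemma mult_le_L_squared_mult: "0 \<le> n \<Longrightarrow> L * n \<le> L\<^sup>2 * n"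
  using L_ge_1 by (intro mult_right_mono) (auto simp: power2_eq_square)

lemma norm_k_le: "norm (k a) \<le> L * norm a"
  using k_lipschitz[of a 0] by (simp add: k_zero)

definition Lz :: real where "Lz = 11 * L\<^sup>2"

lemma Lz_pos: "0 < Lz"
  using L_pos by (simp add: Lz_def)

end

lemma has_integral_increment_subinterval:
  fixes f F :: "real \<Rightarrow> 'a::banach"
  assumes I: "\<And>t. t \<ge> 0 \<Longrightarrow> (f has_integral (F t - F 0)) {0..t}" and ab: "0 \<le> a" "a \<le> b"
  shows "(f has_integral (F b - F a)) {a..b}"
proof -
  have "f integrable_on {a..b}"
    using integrable_subinterval_real[OF has_integral_integrable[OF I[of b]], of a b] ab by auto
  then obtain j where j: "(f has_integral j) {a..b}" by blast
  have "(f has_integral ((F a - F 0) + j)) {0..b}"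
    by (rule has_integral_combine[OF ab I[OF ab(1)] j])
  moreover have "(f has_integral (F b - F 0)) {0..b}" using ab by (intro I) linarith
  ultimately have "(F a - F 0) + j = F b - F 0" by (rule has_integral_unique)
  then have "j = F b - F a" by (simp add: algebra_simps)
  with j show ?thesis by simp
qed

lemma norm_has_integral_le:
  fixes f :: "real \<Rightarrow> 'a::real_normed_vector"
  assumes "(f has_integral i) {a..b}" "a \<le> b" "0 \<le> B" "\<And>s. s \<in> {a..b} \<Longrightarrow> norm (f s) \<le> B"
  shows "norm i \<le> B * (b - a)"
  using has_integral_bound[of B f i a b] assms by (simp add: content_real)

lemma dwell_error_estimate:
  fixes q S E n \<theta> \<omega> :: real
  assumes q: "0 \<le> q" "q \<le> 1/4" "q \<le> \<theta>/2" and nonneg: "0 \<le> S" "0 \<le> E" "0 \<le> n" "0 \<le> \<omega>"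
    and E: "E \<le> q * (S + E)" and S: "S \<le> n + q * (S + E + \<omega>)"
  shows "E \<le> \<theta> * n + \<omega>"
proof -
  have small: "q * S \<le> S / 4" "q * E \<le> E / 4" "q * \<omega> \<le> \<omega> / 4" "q * n \<le> \<theta> / 2 * n"
    using mult_right_mono[OF q(2)] mult_right_mono[OF q(3)] nonneg by auto
  have E': "E \<le> q * S + q * E" and S': "S \<le> n + q * S + q * E + q * \<omega>"
    using E S by (simp_all add: distrib_left)
  then have "S \<le> 3/2 * n + 3/8 * \<omega>" using small by linarith
  then have "q * S \<le> 3/2 * (q * n) + 3/8 * (q * \<omega>)"
    using mult_left_mono[OF _ q(1)] by (fastforce simp: algebra_simps)
  then show ?thesis using E' small nonneg by linarith
qed

locale et_trajectory = lipschitz_observer_loop f g k L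
  for f :: "real^'x \<Rightarrow> 'u::real_normed_vector \<Rightarrow> 'w::real_normed_vector \<Rightarrow> real^'x"
    and g :: "real^'x \<Rightarrow> real^'x \<Rightarrow> 'u \<Rightarrow> real^'x"
    and k :: "real^'x \<Rightarrow> 'u"
    and L :: real +
  fixes \<tau> \<sigma> \<epsilon> \<omega> :: real
    and x xh xs :: "real \<Rightarrow> real^'x" and tk :: "nat \<Rightarrow> ereal" and w :: "real \<Rightarrow> 'w"
  assumes \<tau>_pos: "\<tau> > 0"
    and tk_0: "tk 0 = 0"
    and tk_Suc: "tk (Suc n) = Inf {ereal s | s. tk n + ereal \<tau> \<le> ereal s \<and>
             norm (xh (real_of_ereal (tk n)) - xh s) > \<sigma> * norm (xh s) + \<epsilon>}"
    and xs_held: "tk n \<le> ereal s \<Longrightarrow> ereal s < tk (Suc n) \<Longrightarrow> xs s = xh (real_of_ereal (tk n))"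
    and continuous_x: "continuous_on {0..} x" and continuous_xh: "continuous_on {0..} xh"
    and x_integral: "t \<ge> 0 \<Longrightarrow> ((\<lambda>s. f (x s) (k (xs s)) (w s)) has_integral (x t - x 0)) {0..t}"
    and xh_integral: "t \<ge> 0 \<Longrightarrow> ((\<lambda>s. g (x s) (xh s) (k (xs s))) has_integral (xh t - xh 0)) {0..t}"
    and norm_w_le: "s \<ge> 0 \<Longrightarrow> norm (w s) \<le> \<omega>"
begin

definition z :: "real \<Rightarrow> real^('x + 'x)" where "z t = stack (x t) (x t - xh t)"
definition sampling_error :: "real \<Rightarrow> real^'x" where "sampling_error t = xs t - xh t"
definition x_rate :: "real \<Rightarrow> real^'x" where "x_rate s = f (x s) (k (xs s)) (w s)"
definition xh_rate :: "real \<Rightarrow> real^'x" where "xh_rate s = g (x s) (xh s) (k (xs s))"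
definition z_rate :: "real \<Rightarrow> real^('x + 'x)" where "z_rate s = stack (x_rate s) (x_rate s - xh_rate s)"

lemma \<omega>_nonneg: "0 \<le> \<omega>"
  using norm_w_le[of 0] norm_ge_zero order_trans by blast

lemma continuous_on_z: "continuous_on {0..} z"
  unfolding z_def[abs_def] by (intro continuous_on_stack continuous_on_diff continuous_x continuous_xh)

lemma xh_rate_integral: "0 \<le> a \<Longrightarrow> a \<le> b \<Longrightarrow> (xh_rate has_integral (xh b - xh a)) {a..b}"
  using has_integral_increment_subinterval[of xh_rate xh a b] xh_integral unfolding xh_rate_def by blast

lemma z_rate_integral: "0 \<le> a \<Longrightarrow> a \<le> b \<Longrightarrow> (z_rate has_integral (z b - z a)) {a..b}"
proof -
  assume ab: "0 \<le> a" "a \<le> b"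
  have "(x_rate has_integral (x b - x a)) {a..b}"
    using has_integral_increment_subinterval[of x_rate x a b] x_integral ab unfolding x_rate_def by blast
  from has_integral_stack[OF this has_integral_diff[OF this xh_rate_integral[OF ab]]]
  show ?thesis by (simp add: z_rate_def[abs_def] z_def stack_diff algebra_simps)
qed

lemma norm_le_norm_z:
  "norm (x t) \<le> norm (z t)" "norm (x t - xh t) \<le> norm (z t)" "norm (xh t) \<le> 2 * norm (z t)"
proof -
  show "norm (x t) \<le> norm (z t)" "norm (x t - xh t) \<le> norm (z t)"
    unfolding z_def by (rule norm_le_norm_stack1 norm_le_norm_stack2)+
  moreover have "norm (xh t) \<le> norm (x t) + norm (x t - xh t)"
    using norm_triangle_ineq4[of "x t" "x t - xh t"] by simp
  ultimately show "norm (xh t) \<le> 2 * norm (z t)" by linarith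
qed

lemma norm_diff_le_norm_z_diff:
  "norm (x r - x t) \<le> norm (z r - z t)" "norm (xh r - xh t) \<le> 2 * norm (z r - z t)"
proof -
  have zd: "z r - z t = stack (x r - x t) ((x r - x t) - (xh r - xh t))"
    by (simp add: z_def stack_diff algebra_simps)
  show "norm (x r - x t) \<le> norm (z r - z t)" unfolding zd by (rule norm_le_norm_stack1)
  moreover have "norm ((x r - x t) - (xh r - xh t)) \<le> norm (z r - z t)"
    unfolding zd by (rule norm_le_norm_stack2)
  moreover have "norm (xh r - xh t) \<le> norm (x r - x t) + norm ((x r - x t) - (xh r - xh t))"
    using norm_triangle_ineq4[of "x r - x t" "(x r - x t) - (xh r - xh t)"] by simp
  ultimately show "norm (xh r - xh t) \<le> 2 * norm (z r - z t)" by linarith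
qed

lemma norm_input_le: "norm (k (xs s)) \<le> L * (2 * norm (z s) + norm (sampling_error s))"
proof -
  have "norm (xs s) \<le> norm (xh s) + norm (sampling_error s)"
    unfolding sampling_error_def using norm_triangle_ineq[of "xh s" "xs s - xh s"] by simp
  also have "\<dots> \<le> 2 * norm (z s) + norm (sampling_error s)" using norm_le_norm_z(3) by simp
  finally show ?thesis using norm_k_le[of "xs s"] L_pos by (meson mult_left_mono less_imp_le order_trans)
qed

lemma norm_x_rate_le: "norm (x_rate s) \<le> 3 * L\<^sup>2 * (norm (z s) + norm (sampling_error s) + norm (w s))"
proof -
  have "norm (x_rate s) \<le> L * (norm (x s) + norm (k (xs s)) + norm (w s))"
    using f_lipschitz[of "x s" "k (xs s)" "w s" 0 0 0] by (simp add: x_rate_def f_zero)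
  also have "\<dots> \<le> L * (norm (z s) + L * (2 * norm (z s) + norm (sampling_error s)) + norm (w s))"
    using norm_le_norm_z(1)[of s] norm_input_le[of s] L_pos by (intro mult_left_mono add_mono) auto
  also have "\<dots> \<le> 3 * L\<^sup>2 * (norm (z s) + norm (sampling_error s) + norm (w s))"
  proof -
    have "L * (norm (z s) + L * (2 * norm (z s) + norm (sampling_error s)) + norm (w s))
        = L * norm (z s) + 2 * (L\<^sup>2 * norm (z s)) + L\<^sup>2 * norm (sampling_error s) + L * norm (w s)"
      by (simp add: algebra_simps power2_eq_square)
    moreover have "L * norm (z s) \<le> L\<^sup>2 * norm (z s)" "L * norm (w s) \<le> L\<^sup>2 * norm (w s)"
      by (simp_all add: mult_le_L_squared_mult)
    moreover have "0 \<le> L\<^sup>2 * norm (sampling_error s)" "0 \<le> L\<^sup>2 * norm (w s)" by simp_all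
    moreover have "3 * L\<^sup>2 * (norm (z s) + norm (sampling_error s) + norm (w s))
        = 3 * (L\<^sup>2 * norm (z s)) + 3 * (L\<^sup>2 * norm (sampling_error s)) + 3 * (L\<^sup>2 * norm (w s))"
      by (simp add: algebra_simps)
    ultimately show ?thesis by linarith
  qed
  finally show ?thesis .
qed

lemma norm_xh_rate_le: "norm (xh_rate s) \<le> 5 * L\<^sup>2 * (norm (z s) + norm (sampling_error s))"
proof -
  have "norm (xh_rate s) \<le> L * (norm (x s) + norm (xh s) + norm (k (xs s)))"
    using g_lipschitz[of "x s" "xh s" "k (xs s)" 0 0 0] by (simp add: xh_rate_def g_zero)
  also have "\<dots> \<le> L * (norm (z s) + 2 * norm (z s) + L * (2 * norm (z s) + norm (sampling_error s)))"
    using norm_le_norm_z(1,3)[of s] norm_input_le[of s] L_pos by (intro mult_left_mono add_mono) auto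
  also have "\<dots> \<le> 5 * L\<^sup>2 * (norm (z s) + norm (sampling_error s))"
  proof -
    have "L * (norm (z s) + 2 * norm (z s) + L * (2 * norm (z s) + norm (sampling_error s)))
        = 3 * (L * norm (z s)) + 2 * (L\<^sup>2 * norm (z s)) + L\<^sup>2 * norm (sampling_error s)"
      "5 * L\<^sup>2 * (norm (z s) + norm (sampling_error s))
        = 5 * (L\<^sup>2 * norm (z s)) + 5 * (L\<^sup>2 * norm (sampling_error s))"
      by (simp_all add: algebra_simps power2_eq_square)
    moreover have "L * norm (z s) \<le> L\<^sup>2 * norm (z s)" by (simp add: mult_le_L_squared_mult)
    moreover have "0 \<le> L\<^sup>2 * norm (sampling_error s)" by simp
    ultimately show ?thesis by linarith
  qed
  finally show ?thesis .
qed

lemma norm_xh_rate_le_Lz: "norm (xh_rate s) \<le> Lz * (norm (z s) + norm (sampling_error s))"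
proof -
  have "5 * L\<^sup>2 * (norm (z s) + norm (sampling_error s)) \<le> Lz * (norm (z s) + norm (sampling_error s))"
    unfolding Lz_def by (intro mult_right_mono) auto
  then show ?thesis using norm_xh_rate_le[of s] by linarith
qed

lemma norm_z_rate_le: "norm (z_rate s) \<le> Lz * (norm (z s) + norm (sampling_error s) + norm (w s))"
proof -
  have "norm (z_rate s) \<le> norm (x_rate s) + norm (x_rate s - xh_rate s)"
    unfolding z_rate_def by (rule norm_stack_le)
  also have "\<dots> \<le> 2 * norm (x_rate s) + norm (xh_rate s)"
    using norm_triangle_ineq4[of "x_rate s" "xh_rate s"] by simp
  also have "\<dots> \<le> Lz * (norm (z s) + norm (sampling_error s) + norm (w s))"
  proof -
    have "2 * (3 * L\<^sup>2 * (norm (z s) + norm (sampling_error s) + norm (w s)))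
          + 5 * L\<^sup>2 * (norm (z s) + norm (sampling_error s))
        = 11 * (L\<^sup>2 * norm (z s)) + 11 * (L\<^sup>2 * norm (sampling_error s)) + 6 * (L\<^sup>2 * norm (w s))"
      "Lz * (norm (z s) + norm (sampling_error s) + norm (w s))
        = 11 * (L\<^sup>2 * norm (z s)) + 11 * (L\<^sup>2 * norm (sampling_error s)) + 11 * (L\<^sup>2 * norm (w s))"
      by (simp_all add: Lz_def algebra_simps)
    moreover have "0 \<le> L\<^sup>2 * norm (w s)" by simp
    ultimately show ?thesis using norm_x_rate_le[of s] norm_xh_rate_le[of s] by linarith
  qed
  finally show ?thesis .
qed

lemma tk_dwell: "tk n + ereal \<tau> \<le> tk (Suc n)"
  unfolding tk_Suc[of n] by (rule Inf_greatest) auto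

lemma tk_lower_bound: "ereal (real n * \<tau>) \<le> tk n"
proof (induction n)
  case (Suc n)
  have "ereal (real (Suc n) * \<tau>) = ereal (real n * \<tau>) + ereal \<tau>" by (simp add: algebra_simps)
  also have "\<dots> \<le> tk n + ereal \<tau>" using Suc by (intro add_mono) auto
  also have "\<dots> \<le> tk (Suc n)" by (rule tk_dwell)
  finally show ?case .
qed (simp add: tk_0)

lemma tk_nonneg: "0 \<le> tk n"
proof -
  have "0 \<le> ereal (real n * \<tau>)" using \<tau>_pos by simp
  then show ?thesis using tk_lower_bound[of n] by (rule order_trans)
qed

lemma sampling_interval_exists:
  assumes "t \<ge> 0"
  obtains n a where "tk n = ereal a" "0 \<le> a" "a \<le> t" "ereal t < tk (Suc n)"
proof -
  obtain N where "t < real N * \<tau>" using ex_less_of_nat_mult[OF \<tau>_pos] by blast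
  then have "ereal t < ereal (real N * \<tau>)" by simp
  then have ex: "ereal t < tk N" using tk_lower_bound[of N] by (rule less_le_trans)
  define n' where "n' = (LEAST n. ereal t < tk n)"
  have after: "ereal t < tk n'" unfolding n'_def by (rule LeastI[of _ N]) (rule ex)
  have "n' \<noteq> 0"
  proof
    assume "n' = 0"
    then have "ereal t < 0" using after by (simp add: tk_0)
    then show False using assms by simp
  qed
  then obtain n where n: "n' = Suc n" using not0_implies_Suc by blast
  have "\<not> ereal t < tk n"
    using Least_le[of "\<lambda>n. ereal t < tk n" n] n unfolding n'_def by fastforce
  then have before: "tk n \<le> ereal t" by simp
  moreover obtain a where a: "tk n = ereal a"
    using before tk_nonneg[of n] by (cases "tk n") auto
  ultimately show thesis using tk_nonneg[of n] after n that[of n a] by simp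
qed

lemma xs_eq_sample:
  "tk n = ereal a \<Longrightarrow> a \<le> r \<Longrightarrow> ereal r < tk (Suc n) \<Longrightarrow> xs r = xh a"
  using xs_held[of n r] by simp

lemma no_event_before_next_sample:
  assumes "tk n = ereal a" and "a + \<tau> \<le> t" and "ereal t < tk (Suc n)"
  shows "norm (xh a - xh t) \<le> \<sigma> * norm (xh t) + \<epsilon>"
proof (rule ccontr)
  assume "\<not> ?thesis"
  then have "tk (Suc n) \<le> ereal t"
    unfolding tk_Suc[of n] using assms(1,2) by (intro Inf_lower) auto
  then show False using assms(3) by simp
qed

lemma xs_locally_constant:
  assumes "tk n = ereal a" and "a \<le> t" and "ereal t < tk (Suc n)"
  obtains \<delta> where "\<delta> > 0" "\<And>r. t \<le> r \<Longrightarrow> r < t + \<delta> \<Longrightarrow> xs r = xh a"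
proof -
  obtain b where b: "ereal t < ereal b" "ereal b < tk (Suc n)" using ereal_dense2[OF assms(3)] by blast
  show thesis
  proof (rule that[of "b - t"])
    show "0 < b - t" using b by simp
    fix r assume r: "t \<le> r" "r < t + (b - t)"
    then have "ereal r < ereal b" by simp
    then have "ereal r < tk (Suc n)" using b(2) by (rule less_trans)
    then show "xs r = xh a" using xs_eq_sample[OF assms(1)] assms(2) r(1) by simp
  qed
qed

text \<open>Within the dwell time no event can fire, so the sampling error is controlled only
  through the growth of the observer over an interval of length at most \<open>\<tau>\<close>:
  with \<open>S\<close> and \<open>E\<close> the maxima of \<open>\<parallel>z\<parallel>\<close> and of the error over \<open>[a, t]\<close>, integrating the rates
  gives \<open>E \<le> \<tau> L\<^sub>z (S + E)\<close> and \<open>S \<le> \<parallel>z t\<parallel> + \<tau> L\<^sub>z (S + E + \<omega>)\<close>.\<close>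

lemma sampling_error_during_dwell:
  assumes n: "tk n = ereal a" "0 \<le> a" "a \<le> t" "ereal t < tk (Suc n)" and dwell: "t \<le> a + \<tau>"
    and q: "\<tau> * Lz \<le> 1/4" "\<tau> * Lz \<le> \<theta>/2"
  shows "norm (sampling_error t) \<le> \<theta> * norm (z t) + \<omega>"
proof -
  have xs_a: "xs r = xh a" if "a \<le> r" "r \<le> t" for r
  proof -
    have "ereal r \<le> ereal t" using that(2) by simp
    then have "ereal r < tk (Suc n)" using n(4) by (rule le_less_trans)
    then show ?thesis using xs_eq_sample[OF n(1) that(1)] by blast
  qed
  have sub: "{a..t} \<subseteq> {0..}" using n by auto
  have "continuous_on {a..t} (\<lambda>r. norm (z r))"
    by (intro continuous_on_norm continuous_on_subset[OF continuous_on_z sub])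
  then obtain r1 where r1: "r1 \<in> {a..t}" and S: "\<forall>r\<in>{a..t}. norm (z r) \<le> norm (z r1)"
    using continuous_attains_sup[of "{a..t}"] n(3) by fastforce
  have "continuous_on {a..t} (\<lambda>r. norm (xh a - xh r))"
    by (intro continuous_on_norm continuous_on_diff continuous_on_const continuous_on_subset[OF continuous_xh sub])
  then obtain r2 where r2: "r2 \<in> {a..t}" and E: "\<forall>r\<in>{a..t}. norm (xh a - xh r) \<le> norm (xh a - xh r2)"
    using continuous_attains_sup[of "{a..t}"] n(3) by fastforce
  define S where "S = norm (z r1)"
  define E where "E = norm (xh a - xh r2)"
  have err: "norm (sampling_error r) \<le> E" if "r \<in> {a..t}" for r
    using xs_a[of r] that E by (auto simp: sampling_error_def E_def)
  have zS: "norm (z r) \<le> S" if "r \<in> {a..t}" for r using S that by (simp add: S_def)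
  have "norm (xh r2 - xh a) \<le> Lz * (S + E) * (r2 - a)"
  proof (rule norm_has_integral_le)
    fix s assume "s \<in> {a..r2}"
    then have "s \<in> {a..t}" using r2 by auto
    then show "norm (xh_rate s) \<le> Lz * (S + E)"
      using norm_xh_rate_le_Lz[of s] zS err Lz_pos by (smt (verit) mult_left_mono)
  qed (use xh_rate_integral r2 n Lz_pos in \<open>auto simp: S_def E_def\<close>)
  also have "\<dots> \<le> Lz * (S + E) * \<tau>"
    using r2 dwell Lz_pos by (intro mult_left_mono) (auto simp: S_def E_def)
  finally have E_bound: "E \<le> \<tau> * Lz * (S + E)" by (simp add: E_def norm_minus_commute algebra_simps)
  have "norm (z t - z r1) \<le> Lz * (S + E + \<omega>) * (t - r1)"
  proof (rule norm_has_integral_le)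
    fix s assume "s \<in> {r1..t}"
    then have s: "s \<in> {a..t}" using r1 by auto
    then show "norm (z_rate s) \<le> Lz * (S + E + \<omega>)"
      using norm_z_rate_le[of s] zS[OF s] err[OF s] norm_w_le[of s] n(2) Lz_pos
      by (smt (verit) atLeastAtMost_iff mult_left_mono)
  qed (use z_rate_integral r1 n Lz_pos \<omega>_nonneg in \<open>auto simp: S_def E_def\<close>)
  also have "\<dots> \<le> Lz * (S + E + \<omega>) * \<tau>"
    using r1 dwell n Lz_pos \<omega>_nonneg by (intro mult_left_mono) (auto simp: S_def E_def)
  finally have "S \<le> norm (z t) + \<tau> * Lz * (S + E + \<omega>)"
    using norm_triangle_ineq4[of "z t" "z t - z r1"] by (simp add: S_def algebra_simps)
  with E_bound have "E \<le> \<theta> * norm (z t) + \<omega>"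
    using \<tau>_pos Lz_pos \<omega>_nonneg q
    by (intro dwell_error_estimate[where q = "\<tau> * Lz" and S = S]) (auto simp: S_def E_def)
  then show ?thesis using err[of t] n(3) by simp
qed

lemma sampling_error_bound:
  assumes t: "t \<ge> 0" and \<sigma>: "0 \<le> \<sigma>" "\<sigma> \<le> \<theta>/2" and \<epsilon>: "0 \<le> \<epsilon>"
    and q: "\<tau> * Lz \<le> 1/4" "\<tau> * Lz \<le> \<theta>/2"
  shows "norm (sampling_error t) \<le> \<theta> * norm (z t) + \<epsilon> + \<omega>"
proof -
  obtain n a where n: "tk n = ereal a" "0 \<le> a" "a \<le> t" "ereal t < tk (Suc n)"
    using sampling_interval_exists[OF t] by blast
  show ?thesis
  proof (cases "a + \<tau> \<le> t")
    case True
    have "sampling_error t = xh a - xh t" using xs_eq_sample[OF n(1,3,4)] by (simp add: sampling_error_def)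
    then have "norm (sampling_error t) \<le> \<sigma> * norm (xh t) + \<epsilon>"
      using no_event_before_next_sample[OF n(1) True n(4)] by simp
    also have "\<sigma> * norm (xh t) \<le> \<theta> * norm (z t)"
      using mult_mono[OF \<sigma>(2) norm_le_norm_z(3)[of t]] \<sigma> by (simp add: mult_ac)
    finally show ?thesis using \<omega>_nonneg by linarith
  next
    case False
    then show ?thesis using sampling_error_during_dwell[OF n _ q] \<epsilon> by fastforce
  qed
qed

end

section \<open>Lyapunov analysis of the event-triggered loop\<close>

lemma has_integral_le_const:
  fixes f :: "real \<Rightarrow> real"
  assumes "(f has_integral i) {a..b}" "a \<le> b" "\<And>s. s \<in> {a..b} \<Longrightarrow> f s \<le> K"
  shows "i \<le> K * (b - a)"
  using has_integral_le[OF assms(1) has_integral_const_real[of K a b]] assms(2,3)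
  by (simp add: mult.commute)

lemma young_product_le:
  fixes c K a s :: real
  assumes "0 < c"
  shows "K * a * s \<le> c * a\<^sup>2 + K\<^sup>2 * s\<^sup>2 / (4 * c)"
proof -
  have "4 * c * (K * a * s) \<le> 4 * c * (c * a\<^sup>2) + K\<^sup>2 * s\<^sup>2"
    using zero_le_power2[of "2 * c * a - K * s"] by (simp add: power2_eq_square algebra_simps)
  with assms show ?thesis by (simp add: field_simps)
qed

text \<open>For small \<open>\<theta>\<close> the part of the perturbation proportional to \<open>\<parallel>z\<parallel>\<close> is absorbed by half of
  the dissipation; the part of size \<open>\<epsilon> + \<omega>\<close> survives, via Young's inequality, as a constant offset.\<close>

lemma perturbation_absorption:
  fixes \<alpha> m M L \<theta> n e V \<epsilon> \<omega> :: real
  assumes \<alpha>: "0 < \<alpha>" and m: "0 < m" and M: "0 < M" and L: "1 \<le> L"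
    and \<theta>: "6 * M * L\<^sup>2 * \<theta> \<le> \<alpha> * m / 4"
    and V: "m * n\<^sup>2 \<le> V" and n: "0 \<le> n" and e: "e \<le> \<theta> * n + \<epsilon> + \<omega>"
    and \<epsilon>\<omega>: "0 \<le> \<epsilon>" "0 \<le> \<omega>"
  shows "- \<alpha> * V + 2 * M * n * (3 * L\<^sup>2 * e + 2 * L * \<omega>)
    \<le> - (\<alpha> / 2) * V + 100 * \<alpha> * m * (M * L\<^sup>2 / (\<alpha> * m))\<^sup>2 * (\<epsilon> + \<omega>)\<^sup>2"
proof -
  have "L \<le> L\<^sup>2" using L by (simp add: power2_eq_square)
  then have "3 * L\<^sup>2 * e + 2 * L * \<omega> \<le> 3 * L\<^sup>2 * (\<theta> * n + \<epsilon> + \<omega>) + 2 * L\<^sup>2 * \<omega>"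
    using e \<epsilon>\<omega> by (intro add_mono mult_left_mono mult_right_mono) auto
  also have "\<dots> \<le> 3 * L\<^sup>2 * \<theta> * n + 5 * L\<^sup>2 * (\<epsilon> + \<omega>)"
  proof -
    have "3 * (L\<^sup>2 * \<epsilon>) \<le> 5 * (L\<^sup>2 * \<epsilon>)" using \<epsilon>\<omega> by simp
    then show ?thesis by (simp add: algebra_simps)
  qed
  finally have "2 * M * n * (3 * L\<^sup>2 * e + 2 * L * \<omega>)
      \<le> 2 * M * n * (3 * L\<^sup>2 * \<theta> * n + 5 * L\<^sup>2 * (\<epsilon> + \<omega>))"
    using M n by (intro mult_left_mono) (auto simp: algebra_simps)
  also have "\<dots> = (6 * M * L\<^sup>2 * \<theta>) * n\<^sup>2 + (10 * M * L\<^sup>2) * n * (\<epsilon> + \<omega>)"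
    by (simp add: power2_eq_square algebra_simps)
  also have "(6 * M * L\<^sup>2 * \<theta>) * n\<^sup>2 \<le> (\<alpha> * m / 4) * n\<^sup>2"
    using \<theta> by (intro mult_right_mono) auto
  also have "(10 * M * L\<^sup>2) * n * (\<epsilon> + \<omega>)
      \<le> (\<alpha> * m / 4) * n\<^sup>2 + (10 * M * L\<^sup>2)\<^sup>2 * (\<epsilon> + \<omega>)\<^sup>2 / (4 * (\<alpha> * m / 4))"
    using \<alpha> m by (intro young_product_le) simp
  also have "(10 * M * L\<^sup>2)\<^sup>2 * (\<epsilon> + \<omega>)\<^sup>2 / (4 * (\<alpha> * m / 4))
      = 100 * \<alpha> * m * (M * L\<^sup>2 / (\<alpha> * m))\<^sup>2 * (\<epsilon> + \<omega>)\<^sup>2"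
    using \<alpha> m by (simp add: field_simps power2_eq_square)
  finally have "2 * M * n * (3 * L\<^sup>2 * e + 2 * L * \<omega>)
      \<le> (\<alpha> / 2) * (m * n\<^sup>2) + 100 * \<alpha> * m * (M * L\<^sup>2 / (\<alpha> * m))\<^sup>2 * (\<epsilon> + \<omega>)\<^sup>2"
    by (simp add: algebra_simps)
  moreover have "(\<alpha> / 2) * (m * n\<^sup>2) \<le> (\<alpha> / 2) * V" using V \<alpha> by (intro mult_left_mono) auto
  ultimately show ?thesis by linarith
qed

lemma le_sum_if_square_le_sum_squares:
  fixes u X Y :: real
  assumes "0 \<le> X" "0 \<le> Y" "u\<^sup>2 \<le> X\<^sup>2 + Y\<^sup>2"
  shows "u \<le> X + Y"
proof (rule power2_le_imp_le)
  have "0 \<le> 2 * X * Y" using assms(1,2) by simp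
  then show "u\<^sup>2 \<le> (X + Y)\<^sup>2" using assms(3) unfolding power2_sum by linarith
qed (use assms in simp)

locale et_lyapunov = et_trajectory f g k L \<tau> \<sigma> \<epsilon> \<omega> x xh xs tk w
  for f :: "real^'x \<Rightarrow> 'u::real_normed_vector \<Rightarrow> 'w::real_normed_vector \<Rightarrow> real^'x"
    and g :: "real^'x \<Rightarrow> real^'x \<Rightarrow> 'u \<Rightarrow> real^'x"
    and k :: "real^'x \<Rightarrow> 'u"
    and L \<tau> \<sigma> \<epsilon> \<omega> :: real
    and x xh xs :: "real \<Rightarrow> real^'x" and tk :: "nat \<Rightarrow> ereal" and w :: "real \<Rightarrow> 'w" +
  fixes P :: "real^('x + 'x)^('x + 'x)" and \<alpha> m M :: real
  assumes P_sym: "transpose P = P"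
    and \<alpha>_pos: "0 < \<alpha>"
    and m_pos: "0 < m" and P_coercive: "m * (norm v)\<^sup>2 \<le> v \<bullet> (P *v v)"
    and M_pos: "0 < M" and norm_P_le: "norm (P *v v) \<le> M * norm v"
    and continuous_loop_decrease:
      "\<forall>y yh. let u = k yh; dy = f y u 0; dyh = g y yh u; z = stack y (y - yh); dz = stack dy (dy - dyh)
         in dz \<bullet> (P *v z) + z \<bullet> (P *v dz) \<le> - \<alpha> * (z \<bullet> (P *v z))"
begin

definition V :: "real \<Rightarrow> real" where "V t = z t \<bullet> (P *v z t)"

definition nominal_rate :: "real \<Rightarrow> real^('x + 'x)" where
  "nominal_rate t = stack (f (x t) (k (xh t)) 0) (f (x t) (k (xh t)) 0 - g (x t) (xh t) (k (xh t)))"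

definition perturbation :: "real \<Rightarrow> real" where
  "perturbation t = 3 * L\<^sup>2 * norm (sampling_error t) + 2 * L * \<omega>"

lemma perturbation_nonneg: "0 \<le> perturbation t"
  using L_pos \<omega>_nonneg by (simp add: perturbation_def)

lemma nominal_rate_decrease: "2 * (nominal_rate t \<bullet> (P *v z t)) \<le> - \<alpha> * V t"
  using spec[OF spec[OF continuous_loop_decrease, of "x t"], of "xh t"]
    inner_matrix_vector_commute[OF P_sym, of "z t" "nominal_rate t"]
  by (simp add: V_def nominal_rate_def z_def Let_def)

lemma V_diff: "V b - V a = (z b - z a) \<bullet> (P *v (z b + z a))"
  unfolding V_def by (rule quadratic_form_diff[OF P_sym])

lemma V_le: "V t \<le> M * (norm (z t))\<^sup>2"
proof -
  have "V t \<le> norm (z t) * norm (P *v z t)" unfolding V_def by (rule norm_cauchy_schwarz)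
  also have "\<dots> \<le> norm (z t) * (M * norm (z t))" using norm_P_le by (intro mult_left_mono) auto
  finally show ?thesis by (simp add: power2_eq_square algebra_simps)
qed

lemma V_ge: "m * (norm (z t))\<^sup>2 \<le> V t"
  unfolding V_def by (rule P_coercive)

lemma continuous_on_V: "S \<subseteq> {0..} \<Longrightarrow> continuous_on S V"
  unfolding V_def[abs_def]
  by (intro continuous_on_inner bounded_linear.continuous_on[OF matrix_vector_mul_bounded_linear]
      continuous_on_subset[OF continuous_on_z])

lemma norm_z_rate_minus_nominal:
  assumes "xs r = xs t"
  shows "norm (z_rate r - nominal_rate t)
    \<le> 5 * L * norm (z r - z t) + 3 * L\<^sup>2 * norm (sampling_error t) + 2 * L * norm (w r)"
proof -
  let ?u = "k (xh t)"
  have u: "norm (k (xs r) - ?u) \<le> L * norm (sampling_error t)"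
    using k_lipschitz[of "xs t" "xh t"] assms by (simp add: sampling_error_def)
  have fx: "norm (x_rate r - f (x t) ?u 0) \<le> L * (norm (z r - z t) + L * norm (sampling_error t) + norm (w r))"
    using f_lipschitz[of "x r" "k (xs r)" "w r" "x t" ?u 0] norm_diff_le_norm_z_diff(1)[of r t] u L_pos
    by (simp add: x_rate_def) (smt (verit) mult_left_mono)
  have fh: "norm (xh_rate r - g (x t) (xh t) ?u) \<le> L * (3 * norm (z r - z t) + L * norm (sampling_error t))"
    using g_lipschitz[of "x r" "xh r" "k (xs r)" "x t" "xh t" ?u] norm_diff_le_norm_z_diff[of r t] u L_pos
    by (simp add: xh_rate_def) (smt (verit) mult_left_mono)
  have "norm (z_rate r - nominal_rate t) \<le> norm (x_rate r - f (x t) ?u 0)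
      + norm ((x_rate r - xh_rate r) - (f (x t) ?u 0 - g (x t) (xh t) ?u))"
    unfolding z_rate_def nominal_rate_def stack_diff by (rule norm_stack_le)
  also have "\<dots> \<le> 2 * norm (x_rate r - f (x t) ?u 0) + norm (xh_rate r - g (x t) (xh t) ?u)"
    using norm_triangle_ineq4[of "x_rate r - f (x t) ?u 0" "xh_rate r - g (x t) (xh t) ?u"]
    by (simp add: algebra_simps)
  also have "\<dots> \<le> 5 * L * norm (z r - z t) + 3 * L\<^sup>2 * norm (sampling_error t) + 2 * L * norm (w r)"
    using fx fh by (simp add: algebra_simps power2_eq_square)
  finally show ?thesis .
qed

lemma z_rate_inner_le:
  assumes xs: "xs r = xs t" and r: "0 \<le> r" and \<gamma>: "0 \<le> \<gamma>" "\<gamma> \<le> 1"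
    and near: "norm (z r - z t) \<le> \<gamma>" "norm (z t' - z t) \<le> \<gamma>"
  shows "z_rate r \<bullet> (P *v (z t' + z t)) \<le> - \<alpha> * V t + 2 * M * norm (z t) * perturbation t
    + \<gamma> * (M * norm (nominal_rate t) + M * perturbation t + 5 * L * M * (2 * norm (z t) + 1))"
proof -
  let ?N = "nominal_rate t" and ?G = "perturbation t"
  define \<rho> where "\<rho> = P *v (z t' - z t)"
  have v: "P *v (z t' + z t) = 2 *\<^sub>R (P *v z t) + \<rho>"
    by (simp add: \<rho>_def matrix_vector_right_distrib matrix_vector_mult_diff_distrib scaleR_2)
  have \<rho>: "norm \<rho> \<le> M * \<gamma>"
    using norm_P_le[of "z t' - z t"] near(2) M_pos unfolding \<rho>_def by (smt (verit) mult_left_mono)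
  have nv: "norm (P *v (z t' + z t)) \<le> 2 * M * norm (z t) + M * \<gamma>"
    using norm_triangle_ineq[of "2 *\<^sub>R (P *v z t)" \<rho>] norm_P_le[of "z t"] \<rho> unfolding v by simp
  have "norm (z_rate r - ?N) \<le> 5 * L * \<gamma> + ?G"
    using norm_z_rate_minus_nominal[OF xs] near(1) norm_w_le[OF r] L_pos
    unfolding perturbation_def by (smt (verit) mult_left_mono)
  then have "(z_rate r - ?N) \<bullet> (P *v (z t' + z t)) \<le> (5 * L * \<gamma> + ?G) * (2 * M * norm (z t) + M * \<gamma>)"
    using norm_cauchy_schwarz[of "z_rate r - ?N"] nv by (smt (verit) mult_mono norm_ge_zero)
  moreover have "?N \<bullet> \<rho> \<le> norm ?N * (M * \<gamma>)"
    using norm_cauchy_schwarz[of ?N \<rho>] \<rho> by (smt (verit) mult_left_mono norm_ge_zero)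
  moreover have "z_rate r \<bullet> (P *v (z t' + z t))
      = 2 * (?N \<bullet> (P *v z t)) + ?N \<bullet> \<rho> + (z_rate r - ?N) \<bullet> (P *v (z t' + z t))"
    unfolding v by (simp add: inner_diff_left inner_add_right)
  moreover have "5 * L * M * (\<gamma> * \<gamma>) \<le> 5 * L * M * \<gamma>"
    using \<gamma> L_pos M_pos mult_left_le[of \<gamma> \<gamma>] by (intro mult_left_mono) auto
  ultimately show ?thesis
    using nominal_rate_decrease[of t] by (simp add: algebra_simps)
qed

lemma V_upper_right_dini:
  assumes t: "0 \<le> t"
  shows "upper_right_dini_le V t (- \<alpha> * V t + 2 * M * norm (z t) * perturbation t)"
  unfolding upper_right_dini_le_def
proof (intro allI impI)
  fix \<eta> :: real assume \<eta>: "\<eta> > 0"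
  define R where "R = M * norm (nominal_rate t) + M * perturbation t + 5 * L * M * (2 * norm (z t) + 1)"
  have R: "0 \<le> R" using M_pos L_pos perturbation_nonneg by (simp add: R_def)
  define \<gamma> where "\<gamma> = min 1 (\<eta> / (R + 1))"
  have \<gamma>: "0 < \<gamma>" "\<gamma> \<le> 1" using \<eta> R by (auto simp: \<gamma>_def)
  have "\<gamma> \<le> \<eta> / (R + 1)" by (simp add: \<gamma>_def)
  then have "\<gamma> * (R + 1) \<le> \<eta>" using R by (simp add: pos_le_divide_eq)
  then have \<gamma>R: "\<gamma> * R \<le> \<eta>" using \<gamma> by (simp add: algebra_simps)
  obtain \<delta>1 where \<delta>1: "\<delta>1 > 0" "\<And>r. r \<in> {0..} \<Longrightarrow> dist r t < \<delta>1 \<Longrightarrow> dist (z r) (z t) < \<gamma>"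
    using continuous_on_z t \<gamma>(1) unfolding continuous_on_iff by (metis atLeast_iff)
  obtain n a where n: "tk n = ereal a" "a \<le> t" "ereal t < tk (Suc n)"
    using sampling_interval_exists[OF t] by blast
  obtain \<delta>2 where \<delta>2: "\<delta>2 > 0" "\<And>r. t \<le> r \<Longrightarrow> r < t + \<delta>2 \<Longrightarrow> xs r = xh a"
    using xs_locally_constant[OF n] by blast
  show "\<exists>\<delta>>0. \<forall>h. 0 < h \<longrightarrow> h < \<delta> \<longrightarrow>
      V (t + h) \<le> V t + h * (- \<alpha> * V t + 2 * M * norm (z t) * perturbation t + \<eta>)"
  proof (intro exI[of _ "min \<delta>1 \<delta>2"] conjI allI impI)
    show "0 < min \<delta>1 \<delta>2" using \<delta>1 \<delta>2 by simp
    fix h assume h: "0 < h" "h < min \<delta>1 \<delta>2"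
    have near: "norm (z r - z t) \<le> \<gamma>" "xs r = xs t" if "r \<in> {t..t + h}" for r
      using \<delta>1(2)[of r] \<delta>2(2)[of r] \<delta>2(2)[of t] that h t \<delta>2(1)
      by (auto simp: dist_norm dist_real_def)
    let ?B = "- \<alpha> * V t + 2 * M * norm (z t) * perturbation t + \<eta>"
    have int: "((\<lambda>s. z_rate s \<bullet> (P *v (z (t + h) + z t))) has_integral (z (t + h) - z t) \<bullet> (P *v (z (t + h) + z t))) {t..t + h}"
      using has_integral_linear[OF z_rate_integral[of t "t + h"] bounded_linear_inner_left] t h
      by (simp add: o_def)
    have "z_rate s \<bullet> (P *v (z (t + h) + z t)) \<le> ?B" if "s \<in> {t..t + h}" for s
      using z_rate_inner_le[OF near(2)[OF that] _ less_imp_le[OF \<gamma>(1)] \<gamma>(2) near(1)[OF that], of "t + h"]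
        near(1)[of "t + h"] that t h \<gamma>R \<gamma>(1) unfolding R_def
      by (smt (verit) atLeastAtMost_iff mult_left_mono)
    then have "(z (t + h) - z t) \<bullet> (P *v (z (t + h) + z t)) \<le> ?B * (t + h - t)"
      using has_integral_le_const[OF int] h by simp
    then show "V (t + h) \<le> V t + h * ?B"
      using V_diff[of "t + h" t] h by (simp add: algebra_simps)
  qed
qed

lemma V_upper_right_dini_practical:
  assumes \<theta>: "6 * M * L\<^sup>2 * \<theta> \<le> \<alpha> * m / 4" and \<sigma>: "0 \<le> \<sigma>" "\<sigma> \<le> \<theta>/2" and \<epsilon>: "0 \<le> \<epsilon>"
    and q: "\<tau> * Lz \<le> 1/4" "\<tau> * Lz \<le> \<theta>/2" and t: "0 \<le> t"
  shows "upper_right_dini_le V t (- (\<alpha> / 2) * V t + 100 * \<alpha> * m * (M * L\<^sup>2 / (\<alpha> * m))\<^sup>2 * (\<epsilon> + \<omega>)\<^sup>2)"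
  using V_upper_right_dini[OF t]
proof (rule upper_right_dini_le_mono)
  show "- \<alpha> * V t + 2 * M * norm (z t) * perturbation t
      \<le> - (\<alpha> / 2) * V t + 100 * \<alpha> * m * (M * L\<^sup>2 / (\<alpha> * m))\<^sup>2 * (\<epsilon> + \<omega>)\<^sup>2"
    unfolding perturbation_def
    using perturbation_absorption[OF \<alpha>_pos m_pos M_pos L_ge_1 \<theta> V_ge norm_ge_zero
        sampling_error_bound[OF t \<sigma> \<epsilon> q] \<epsilon> \<omega>_nonneg] .
qed

lemma norm_z_bound:
  assumes \<theta>: "6 * M * L\<^sup>2 * \<theta> \<le> \<alpha> * m / 4" and \<sigma>: "0 \<le> \<sigma>" "\<sigma> \<le> \<theta>/2" and \<epsilon>: "0 \<le> \<epsilon>"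
    and q: "\<tau> * Lz \<le> 1/4" "\<tau> * Lz \<le> \<theta>/2" and t: "0 \<le> t"
  shows "norm (z t) \<le> sqrt (M / m) * exp (- (\<alpha> / 4) * t) * norm (z 0)
    + 15 * (M * L\<^sup>2 / (\<alpha> * m)) * (\<epsilon> + \<omega>)"
proof -
  define G where "G = M * L\<^sup>2 / (\<alpha> * m)"
  define c where "c = 100 * \<alpha> * m * G\<^sup>2 * (\<epsilon> + \<omega>)\<^sup>2"
  have c: "c / (\<alpha> / 2) = 200 * m * G\<^sup>2 * (\<epsilon> + \<omega>)\<^sup>2" "0 \<le> c"
    using \<alpha>_pos m_pos by (simp_all add: c_def)
  have "V t \<le> exp (- (\<alpha> / 2) * (t - 0)) * max (V 0 - c / (\<alpha> / 2)) 0 + c / (\<alpha> / 2)"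
    using V_upper_right_dini_practical[OF \<theta> \<sigma> \<epsilon> q] \<alpha>_pos t
    by (intro dini_comparison continuous_on_V) (auto simp: c_def G_def)
  also have "max (V 0 - c / (\<alpha> / 2)) 0 \<le> M * (norm (z 0))\<^sup>2"
    using V_le[of 0] V_ge[of 0] m_pos c \<alpha>_pos by (smt (verit) divide_nonneg_pos zero_le_power2 mult_nonneg_nonneg)
  finally have "m * (norm (z t))\<^sup>2 \<le> exp (- (\<alpha> / 2) * t) * (M * (norm (z 0))\<^sup>2) + 200 * m * G\<^sup>2 * (\<epsilon> + \<omega>)\<^sup>2"
    using V_ge[of t] c by (smt (verit) exp_gt_zero mult_left_mono)
  also have "\<dots> = m * (M / m * exp (- (\<alpha> / 2) * t) * (norm (z 0))\<^sup>2 + 200 * G\<^sup>2 * (\<epsilon> + \<omega>)\<^sup>2)"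
    using m_pos by (simp add: field_simps)
  finally have "(norm (z t))\<^sup>2 \<le> M / m * exp (- (\<alpha> / 2) * t) * (norm (z 0))\<^sup>2 + 200 * G\<^sup>2 * (\<epsilon> + \<omega>)\<^sup>2"
    using m_pos by simp
  moreover have "M / m * exp (- (\<alpha> / 2) * t) * (norm (z 0))\<^sup>2 = (sqrt (M / m) * exp (- (\<alpha> / 4) * t) * norm (z 0))\<^sup>2"
  proof -
    have "(exp (- (\<alpha> / 4) * t))\<^sup>2 = exp (- (\<alpha> / 2) * t)"
      unfolding power2_eq_square exp_add[symmetric] by (simp add: algebra_simps)
    moreover have "(sqrt (M / m))\<^sup>2 = M / m" using M_pos m_pos by simp
    ultimately show ?thesis by (simp only: power_mult_distrib)
  qed
  moreover have "200 * G\<^sup>2 * (\<epsilon> + \<omega>)\<^sup>2 \<le> (15 * G * (\<epsilon> + \<omega>))\<^sup>2"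
    using mult_right_mono[of 200 225 "G\<^sup>2 * (\<epsilon> + \<omega>)\<^sup>2"] by (simp add: power_mult_distrib mult.assoc)
  ultimately have sq: "(norm (z t))\<^sup>2 \<le> (sqrt (M / m) * exp (- (\<alpha> / 4) * t) * norm (z 0))\<^sup>2 + (15 * G * (\<epsilon> + \<omega>))\<^sup>2"
    by linarith
  have "0 \<le> sqrt (M / m) * exp (- (\<alpha> / 4) * t) * norm (z 0)" using M_pos m_pos by simp
  moreover have "0 \<le> 15 * G * (\<epsilon> + \<omega>)"
    using M_pos m_pos \<alpha>_pos \<epsilon> \<omega>_nonneg by (simp add: G_def)
  ultimately show ?thesis using le_sum_if_square_le_sum_squares[OF _ _ sq] by (simp add: G_def)
qed

end

section \<open>The plant, the observer and the controller\<close>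

lemma norm_matrix_vector_lipschitz_diff_le:
  fixes E :: "real^'p^'m" and p :: "'a::metric_space \<Rightarrow> real^'p"
  assumes "Lp-lipschitz_on UNIV p"
  shows "norm (E *v p a - E *v p b) \<le> matrix_opnorm E * Lp * dist a b"
proof -
  have "norm (E *v p a - E *v p b) \<le> matrix_opnorm E * norm (p a - p b)"
    by (rule norm_matrix_vector_diff_le)
  also have "\<dots> \<le> matrix_opnorm E * (Lp * dist a b)"
    using assms matrix_opnorm_nonneg[of E]
    by (intro mult_left_mono) (auto simp: lipschitz_on_def dist_norm)
  finally show ?thesis by (simp add: mult.assoc)
qed

lemma norm_add4_le:
  fixes a b c d :: "'a::real_normed_vector"
  shows "norm (a + b + c + d) \<le> norm a + norm b + norm c + norm d"
  using norm_triangle_ineq[of "a + b + c" d] norm_triangle_ineq[of "a + b" c] norm_triangle_ineq[of a b]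
  by linarith

lemma weighted_sum_le_mult_sum:
  fixes c1 c2 c3 n1 n2 n3 L :: real
  assumes "c1 \<le> L" "c2 \<le> L" "c3 \<le> L" "0 \<le> n1" "0 \<le> n2" "0 \<le> n3"
  shows "c1 * n1 + c2 * n2 + c3 * n3 \<le> L * (n1 + n2 + n3)"
  using mult_right_mono[OF assms(1,4)] mult_right_mono[OF assms(2,5)] mult_right_mono[OF assms(3,6)]
  by (simp add: distrib_left)

context
  fixes A :: "real^'x^'x" and B :: "real^'u^'x" and C :: "real^'x^'y" and D :: "real^'u^'y"
    and Cq :: "real^'x^'q" and E :: "real^'p^'x" and Ew :: "real^'w^'x"
    and p :: "real^'q \<Rightarrow> real^'p"
    and K1 :: "real^'x^'u" and K2 :: "real^'p^'u" and L1 :: "real^'y^'q" and L2 :: "real^'y^'x"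
    and Lp :: real
  assumes p_lipschitz: "Lp-lipschitz_on UNIV p"
begin

lemma Lp_nonneg: "0 \<le> Lp"
  using p_lipschitz by (rule lipschitz_on_nonneg)

lemma norm_matrix_lipschitz_matrix_diff_le:
  fixes M :: "real^'p^'m" and N :: "real^'n^'q"
  shows "norm (M *v p (N *v a) - M *v p (N *v b)) \<le> matrix_opnorm M * Lp * matrix_opnorm N * norm (a - b)"
proof -
  have "norm (M *v p (N *v a) - M *v p (N *v b)) \<le> matrix_opnorm M * Lp * norm (N *v a - N *v b)"
    using norm_matrix_vector_lipschitz_diff_le[OF p_lipschitz] by (simp add: dist_norm)
  also have "\<dots> \<le> matrix_opnorm M * Lp * (matrix_opnorm N * norm (a - b))"
    using Lp_nonneg matrix_opnorm_nonneg[of M] norm_matrix_vector_diff_le[of N]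
    by (intro mult_left_mono) auto
  finally show ?thesis by (simp add: mult.assoc)
qed

lemma ctrl_input_lipschitz:
  "norm (ctrl_input K1 K2 Cq p a - ctrl_input K1 K2 Cq p b)
    \<le> (matrix_opnorm K1 + matrix_opnorm K2 * Lp * matrix_opnorm Cq) * norm (a - b)"
proof -
  have eq: "ctrl_input K1 K2 Cq p a - ctrl_input K1 K2 Cq p b
      = (K1 *v a - K1 *v b) + (K2 *v p (Cq *v a) - K2 *v p (Cq *v b))"
    by (simp add: ctrl_input_def)
  show ?thesis
    unfolding eq distrib_right
    using norm_triangle_ineq[of "K1 *v a - K1 *v b" "K2 *v p (Cq *v a) - K2 *v p (Cq *v b)"]
      norm_matrix_vector_diff_le[of K1 a b] norm_matrix_lipschitz_matrix_diff_le[of K2 Cq a b]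
    by linarith
qed

lemma plant_rhs_lipschitz:
  "norm (plant_rhs A B E Ew Cq p x u w - plant_rhs A B E Ew Cq p x' u' w')
    \<le> (matrix_opnorm A + matrix_opnorm E * Lp * matrix_opnorm Cq) * norm (x - x')
      + matrix_opnorm B * norm (u - u') + matrix_opnorm Ew * norm (w - w')"
proof -
  have eq: "plant_rhs A B E Ew Cq p x u w - plant_rhs A B E Ew Cq p x' u' w'
      = (A *v x - A *v x') + (B *v u - B *v u') + (E *v p (Cq *v x) - E *v p (Cq *v x'))
        + (Ew *v w - Ew *v w')"
    by (simp add: plant_rhs_def algebra_simps)
  show ?thesis
    unfolding eq distrib_right
    using norm_add4_le[of "A *v x - A *v x'" "B *v u - B *v u'" "E *v p (Cq *v x) - E *v p (Cq *v x')"
        "Ew *v w - Ew *v w'"]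
      norm_matrix_vector_diff_le[of A x x'] norm_matrix_vector_diff_le[of B u u']
      norm_matrix_vector_diff_le[of Ew w w'] norm_matrix_lipschitz_matrix_diff_le[of E Cq x x']
    by linarith
qed

lemma obs_rhs_eq:
  "obs_rhs A B C D Cq E p L1 L2 x xh u
    = A *v xh + B *v u + E *v p (Cq *v xh + L1 *v (C *v (xh - x))) + L2 *v (C *v (xh - x))"
proof -
  have "C *v xh + D *v u - (C *v x + D *v u) = C *v (xh - x)"
    by (simp add: matrix_vector_mult_diff_distrib)
  then show ?thesis by (simp add: obs_rhs_def Let_def)
qed

lemma obs_rhs_lipschitz:
  "norm (obs_rhs A B C D Cq E p L1 L2 x xh u - obs_rhs A B C D Cq E p L1 L2 x' xh' u')
    \<le> (matrix_opnorm A + matrix_opnorm E * Lp * matrix_opnorm Cq) * norm (xh - xh')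
      + matrix_opnorm B * norm (u - u')
      + (matrix_opnorm E * Lp * matrix_opnorm L1 * matrix_opnorm C + matrix_opnorm L2 * matrix_opnorm C)
        * (norm (x - x') + norm (xh - xh'))"
proof -
  let ?q = "Cq *v xh + L1 *v (C *v (xh - x))" and ?q' = "Cq *v xh' + L1 *v (C *v (xh' - x'))"
  have d: "norm ((xh - x) - (xh' - x')) \<le> norm (x - x') + norm (xh - xh')"
    using norm_triangle_ineq4[of "xh - xh'" "x - x'"] by (simp add: algebra_simps)
  have "norm (?q - ?q') \<le> norm (Cq *v xh - Cq *v xh') + norm (L1 *v (C *v (xh - x)) - L1 *v (C *v (xh' - x')))"
    using norm_triangle_ineq[of "Cq *v xh - Cq *v xh'" "L1 *v (C *v (xh - x)) - L1 *v (C *v (xh' - x'))"]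
    by (simp add: algebra_simps)
  also have "\<dots> \<le> matrix_opnorm Cq * norm (xh - xh')
      + matrix_opnorm L1 * matrix_opnorm C * (norm (x - x') + norm (xh - xh'))"
    using norm_matrix_vector_diff_le[of Cq xh xh'] norm_matrix_vector_comp_diff_le[of L1 C "xh - x" "xh' - x'"]
      mult_left_mono[OF d, of "matrix_opnorm L1 * matrix_opnorm C"]
      matrix_opnorm_nonneg[of L1] matrix_opnorm_nonneg[of C]
    by simp
  finally have q: "norm (?q - ?q') \<le> \<dots>" .
  have "norm (E *v p ?q - E *v p ?q') \<le> matrix_opnorm E * Lp * norm (?q - ?q')"
    using norm_matrix_vector_lipschitz_diff_le[OF p_lipschitz] by (simp add: dist_norm)
  also have "\<dots> \<le> matrix_opnorm E * Lp * (matrix_opnorm Cq * norm (xh - xh')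
      + matrix_opnorm L1 * matrix_opnorm C * (norm (x - x') + norm (xh - xh')))"
    using q Lp_nonneg matrix_opnorm_nonneg[of E] by (intro mult_left_mono) auto
  finally have Ep: "norm (E *v p ?q - E *v p ?q') \<le> \<dots>" .
  have L2C: "norm (L2 *v (C *v (xh - x)) - L2 *v (C *v (xh' - x')))
      \<le> matrix_opnorm L2 * matrix_opnorm C * (norm (x - x') + norm (xh - xh'))"
    using norm_matrix_vector_comp_diff_le[of L2 C "xh - x" "xh' - x'"]
      mult_left_mono[OF d, of "matrix_opnorm L2 * matrix_opnorm C"]
      matrix_opnorm_nonneg[of L2] matrix_opnorm_nonneg[of C]
    by simp
  have eq: "obs_rhs A B C D Cq E p L1 L2 x xh u - obs_rhs A B C D Cq E p L1 L2 x' xh' u'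
      = (A *v xh - A *v xh') + (B *v u - B *v u') + (E *v p ?q - E *v p ?q')
        + (L2 *v (C *v (xh - x)) - L2 *v (C *v (xh' - x')))"
    by (simp add: obs_rhs_eq algebra_simps)
  have rhs: "(matrix_opnorm A + matrix_opnorm E * Lp * matrix_opnorm Cq) * norm (xh - xh')
      + matrix_opnorm B * norm (u - u')
      + (matrix_opnorm E * Lp * matrix_opnorm L1 * matrix_opnorm C + matrix_opnorm L2 * matrix_opnorm C)
        * (norm (x - x') + norm (xh - xh'))
    = matrix_opnorm A * norm (xh - xh') + matrix_opnorm B * norm (u - u')
      + matrix_opnorm E * Lp * (matrix_opnorm Cq * norm (xh - xh')
        + matrix_opnorm L1 * matrix_opnorm C * (norm (x - x') + norm (xh - xh')))
      + matrix_opnorm L2 * matrix_opnorm C * (norm (x - x') + norm (xh - xh'))"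
    by (simp add: algebra_simps)
  show ?thesis
    unfolding eq rhs
    using norm_add4_le[of "A *v xh - A *v xh'" "B *v u - B *v u'" "E *v p ?q - E *v p ?q'"
        "L2 *v (C *v (xh - x)) - L2 *v (C *v (xh' - x'))"]
      norm_matrix_vector_diff_le[of A xh xh'] norm_matrix_vector_diff_le[of B u u'] Ep L2C
    by linarith
qed

lemma lipschitz_observer_loop_instance:
  assumes p0: "p 0 = 0"
  shows "\<exists>L. lipschitz_observer_loop (plant_rhs A B E Ew Cq p) (obs_rhs A B C D Cq E p L1 L2)
    (ctrl_input K1 K2 Cq p) L"
proof
  define cx where "cx = matrix_opnorm A + matrix_opnorm E * Lp * matrix_opnorm Cq"
  define cd where "cd = matrix_opnorm E * Lp * matrix_opnorm L1 * matrix_opnorm C + matrix_opnorm L2 * matrix_opnorm C"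
  define ck where "ck = matrix_opnorm K1 + matrix_opnorm K2 * Lp * matrix_opnorm Cq"
  define L where "L = 1 + cx + cd + ck + matrix_opnorm B + matrix_opnorm Ew"
  have nonneg: "0 \<le> cx" "0 \<le> cd" "0 \<le> ck" "0 \<le> matrix_opnorm B" "0 \<le> matrix_opnorm Ew"
    using Lp_nonneg by (simp_all add: cx_def cd_def ck_def matrix_opnorm_nonneg)
  then have le_L: "cx \<le> L" "cd \<le> L" "cx + cd \<le> L" "ck \<le> L" "matrix_opnorm B \<le> L" "matrix_opnorm Ew \<le> L"
    by (simp_all add: L_def)
  show "lipschitz_observer_loop (plant_rhs A B E Ew Cq p) (obs_rhs A B C D Cq E p L1 L2) (ctrl_input K1 K2 Cq p) L"
  proof
    show "1 \<le> L" using nonneg by (simp add: L_def)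
  next
    fix x u w x' u' w'
    show "norm (plant_rhs A B E Ew Cq p x u w - plant_rhs A B E Ew Cq p x' u' w')
        \<le> L * (norm (x - x') + norm (u - u') + norm (w - w'))"
      using plant_rhs_lipschitz[of x u w x' u' w', folded cx_def]
        weighted_sum_le_mult_sum[OF le_L(1,5,6) norm_ge_zero norm_ge_zero norm_ge_zero]
      by (rule order_trans)
  next
    fix x xh x' xh' :: "real^'x" and u u' :: "real^'u"
    have "cx * norm (xh - xh') + matrix_opnorm B * norm (u - u') + cd * (norm (x - x') + norm (xh - xh'))
      = cd * norm (x - x') + (cx + cd) * norm (xh - xh') + matrix_opnorm B * norm (u - u')"
      by (simp add: algebra_simps)
    then show "norm (obs_rhs A B C D Cq E p L1 L2 x xh u - obs_rhs A B C D Cq E p L1 L2 x' xh' u')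
        \<le> L * (norm (x - x') + norm (xh - xh') + norm (u - u'))"
      using obs_rhs_lipschitz[of x xh u x' xh' u', folded cx_def cd_def]
        weighted_sum_le_mult_sum[OF le_L(2,3,5), of "norm (x - x')" "norm (xh - xh')" "norm (u - u')"]
      by simp
  next
    fix a b
    show "norm (ctrl_input K1 K2 Cq p a - ctrl_input K1 K2 Cq p b) \<le> L * norm (a - b)"
      using ctrl_input_lipschitz[of a b, folded ck_def] mult_right_mono[OF le_L(4) norm_ge_zero]
      by (rule order_trans)
  qed (simp_all add: plant_rhs_def obs_rhs_def ctrl_input_def p0)
qed

end

section \<open>Practical stability\<close>

lemma (in lipschitz_observer_loop) et_trajectory_exponential_bound:
  fixes P :: "real^('x + 'x)^('x + 'x)" and \<alpha> m M :: real
  assumes P_sym: "transpose P = P" and \<alpha>: "0 < \<alpha>"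
    and m: "0 < m" "\<And>v. m * (norm v)\<^sup>2 \<le> v \<bullet> (P *v v)"
    and M: "0 < M" "\<And>v. norm (P *v v) \<le> M * norm v"
    and decrease: "\<forall>y yh. let u = k yh; dy = f y u 0; dyh = g y yh u; z = stack y (y - yh); dz = stack dy (dy - dyh)
         in dz \<bullet> (P *v z) + z \<bullet> (P *v dz) \<le> - \<alpha> * (z \<bullet> (P *v z))"
  obtains \<tau> \<sigma> \<epsilon> where "0 < \<tau>" "0 < \<sigma>" "0 < \<epsilon>"
    "\<And>\<omega> x xh xs tk w t. et_trajectory f g k L \<tau> \<sigma> \<epsilon> \<omega> x xh xs tk w \<Longrightarrow> 0 \<le> t \<Longrightarrow>
       norm (stack (x t) (x t - xh t))
         \<le> sqrt (M / m) * exp (- (\<alpha> / 4) * t) * norm (stack (x 0) (x 0 - xh 0))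
           + 15 * (M * L\<^sup>2 / (\<alpha> * m)) * (\<epsilon> + \<omega>)"
proof -
  define \<theta> where "\<theta> = \<alpha> * m / (24 * M * L\<^sup>2)"
  have \<theta>: "0 < \<theta>" "6 * M * L\<^sup>2 * \<theta> \<le> \<alpha> * m / 4"
    using \<alpha> m M L_pos by (simp_all add: \<theta>_def field_simps)
  define \<tau> where "\<tau> = min (1 / (4 * Lz)) (\<theta> / (2 * Lz))"
  have \<tau>: "0 < \<tau>" "\<tau> * Lz \<le> 1/4" "\<tau> * Lz \<le> \<theta>/2"
    using \<theta> Lz_pos by (auto simp: \<tau>_def min_def field_simps)
  show thesis
  proof (rule that[of \<tau> "\<theta> / 2" 1])
    fix \<omega> t :: real and x xh xs :: "real \<Rightarrow> real^'x" and tk :: "nat \<Rightarrow> ereal" and w :: "real \<Rightarrow> 'w"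
    assume traj: "et_trajectory f g k L \<tau> (\<theta> / 2) 1 \<omega> x xh xs tk w" and t: "0 \<le> t"
    interpret et_lyapunov f g k L \<tau> "\<theta> / 2" 1 \<omega> x xh xs tk w P \<alpha> m M
      using traj P_sym \<alpha> m M decrease by (intro et_lyapunov.intro et_lyapunov_axioms.intro) auto
    show "norm (stack (x t) (x t - xh t))
        \<le> sqrt (M / m) * exp (- (\<alpha> / 4) * t) * norm (stack (x 0) (x 0 - xh 0))
          + 15 * (M * L\<^sup>2 / (\<alpha> * m)) * (1 + \<omega>)"
      using norm_z_bound[OF \<theta>(2) _ _ _ \<tau>(2,3) t] \<theta>(1) by (simp add: z_def)
  qed (use \<tau> \<theta> in auto)
qed

lemma class_K_linear: "0 < c \<Longrightarrow> class_K (\<lambda>r. c * r)"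
  unfolding class_K_def by (auto intro!: continuous_intros simp: strict_mono_on_def)

lemma class_KL_exponential:
  assumes c: "0 < c" and a: "0 < a"
  shows "class_KL (\<lambda>r t. c * exp (- a * t) * r)"
  unfolding class_KL_def
proof (intro conjI allI impI)
  fix t :: real
  show "class_K (\<lambda>r. c * exp (- a * t) * r)" using c class_K_linear[of "c * exp (- a * t)"] by simp
next
  fix r s t :: real assume "0 \<le> r" "0 \<le> s" "s \<le> t"
  then show "c * exp (- a * t) * r \<le> c * exp (- a * s) * r"
    using c a by (intro mult_right_mono mult_left_mono) auto
next
  fix r :: real
  have "filterlim (\<lambda>t. - a * t) at_bot at_top"
    using a by (intro filterlim_tendsto_neg_mult_at_bot[OF tendsto_const] filterlim_ident) auto
  then have "((\<lambda>t. exp (- a * t)) \<longlongrightarrow> 0) at_top"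
    by (rule filterlim_compose[OF exp_at_bot])
  then show "((\<lambda>t. c * exp (- a * t) * r) \<longlongrightarrow> 0) at_top"
    using tendsto_mult[OF tendsto_mult[OF tendsto_const] tendsto_const, of _ 0 at_top c r] by simp
qed

theorem (in lipschitz_observer_loop) event_triggered_ISpS:
  fixes P :: "real^('x + 'x)^('x + 'x)" and \<alpha> :: real
  assumes P_sym: "transpose P = P" and P_pos: "\<forall>z. z \<noteq> 0 \<longrightarrow> z \<bullet> (P *v z) > 0" and \<alpha>: "0 < \<alpha>"
    and decrease: "\<forall>y yh. let u = k yh; dy = f y u 0; dyh = g y yh u; z = stack y (y - yh); dz = stack dy (dy - dyh)
         in dz \<bullet> (P *v z) + z \<bullet> (P *v dz) \<le> - \<alpha> * (z \<bullet> (P *v z))"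
  shows "\<exists>\<tau>>0. \<exists>\<sigma>>0. \<exists>\<epsilon>>0. \<exists>\<beta>1 \<beta>2 d. class_KL \<beta>1 \<and> class_K \<beta>2 \<and> d \<ge> 0 \<and>
    (\<forall>\<omega> x xh xs tk w. et_trajectory f g k L \<tau> \<sigma> \<epsilon> \<omega> x xh xs tk w \<longrightarrow>
      (\<forall>t\<ge>0. norm (stack (x t) (x t - xh t)) \<le> \<beta>1 (norm (stack (x 0) (x 0 - xh 0))) t + \<beta>2 \<omega> + d))"
proof -
  obtain m where m: "0 < m" "\<And>v. m * (norm v)\<^sup>2 \<le> v \<bullet> (P *v v)"
    using quadratic_form_coercive[OF P_pos] by blast
  obtain M where M: "0 < M" "\<And>v. norm (P *v v) \<le> M * norm v"
    using bounded_linear.pos_bounded[OF matrix_vector_mul_bounded_linear[of P]] by (metis mult.commute)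
  obtain \<tau> \<sigma> \<epsilon> where params: "0 < \<tau>" "0 < \<sigma>" "0 < \<epsilon>" and bound:
    "\<And>\<omega> x xh xs tk w t. et_trajectory f g k L \<tau> \<sigma> \<epsilon> \<omega> x xh xs tk w \<Longrightarrow> 0 \<le> t \<Longrightarrow>
       norm (stack (x t) (x t - xh t))
         \<le> sqrt (M / m) * exp (- (\<alpha> / 4) * t) * norm (stack (x 0) (x 0 - xh 0))
           + 15 * (M * L\<^sup>2 / (\<alpha> * m)) * (\<epsilon> + \<omega>)"
    using et_trajectory_exponential_bound[OF P_sym \<alpha> m M decrease] by blast
  define G where "G = 15 * (M * L\<^sup>2 / (\<alpha> * m))"
  have "0 \<le> G" using M m \<alpha> by (simp add: G_def)
  then have "class_K (\<lambda>r. (G + 1) * r)" by (intro class_K_linear) simp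
  moreover have "class_KL (\<lambda>r t. sqrt (M / m) * exp (- (\<alpha> / 4) * t) * r)"
    using M m \<alpha> by (intro class_KL_exponential) auto
  moreover have "norm (stack (x t) (x t - xh t))
      \<le> sqrt (M / m) * exp (- (\<alpha> / 4) * t) * norm (stack (x 0) (x 0 - xh 0)) + (G + 1) * \<omega> + (G + 1) * \<epsilon>"
    if traj: "et_trajectory f g k L \<tau> \<sigma> \<epsilon> \<omega> x xh xs tk w" and "0 \<le> t" for \<omega> x xh xs tk w t
    using bound[OF that, folded G_def] et_trajectory.\<omega>_nonneg[OF traj] params(3)
    by (simp add: algebra_simps)
  ultimately have "\<exists>\<beta>1 \<beta>2 d. class_KL \<beta>1 \<and> class_K \<beta>2 \<and> d \<ge> 0 \<and>
    (\<forall>\<omega> x xh xs tk w. et_trajectory f g k L \<tau> \<sigma> \<epsilon> \<omega> x xh xs tk w \<longrightarrow>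
      (\<forall>t\<ge>0. norm (stack (x t) (x t - xh t)) \<le> \<beta>1 (norm (stack (x 0) (x 0 - xh 0))) t + \<beta>2 \<omega> + d))"
    using \<open>0 \<le> G\<close> params(3)
    by (intro exI[of _ "\<lambda>r t. sqrt (M / m) * exp (- (\<alpha> / 4) * t) * r"] exI[of _ "\<lambda>r. (G + 1) * r"]
        exI[of _ "(G + 1) * \<epsilon>"]) auto
  then show ?thesis using params by blast
qed

lemma et_solution_imp_et_trajectory:
  assumes sol: "et_solution A B C D Cq E Ew p K1 K2 L1 L2 \<tau> \<sigma> \<epsilon> \<omega>0 x xh xs tk w"
    and loop: "lipschitz_observer_loop (plant_rhs A B E Ew Cq p) (obs_rhs A B C D Cq E p L1 L2)
      (ctrl_input K1 K2 Cq p) L"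
    and \<tau>: "0 < \<tau>"
  shows "et_trajectory (plant_rhs A B E Ew Cq p) (obs_rhs A B C D Cq E p L1 L2) (ctrl_input K1 K2 Cq p) L
      \<tau> \<sigma> \<epsilon> (SUP s\<in>{0..}. norm (w s)) x xh xs tk w"
proof -
  have "bdd_above ((\<lambda>s. norm (w s)) ` {0..})"
    using sol by (intro bdd_aboveI2[of _ _ \<omega>0]) (auto simp: et_solution_def)
  then have "norm (w s) \<le> (SUP s\<in>{0..}. norm (w s))" if "0 \<le> s" for s
    using that by (intro cSUP_upper) auto
  then show ?thesis
    using sol loop \<tau> by (intro et_trajectory.intro et_trajectory_axioms.intro) (auto simp: et_solution_def)
qed

theorem theorem4:
  fixes A :: "real^'x^'x" and B :: "real^'u^'x" and C :: "real^'x^'y" and D :: "real^'u^'y"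
    and Cq :: "real^'x^'q" and E :: "real^'p^'x" and Ew :: "real^'w^'x"
    and p :: "real^'q \<Rightarrow> real^'p"
    and K1 :: "real^'x^'u" and K2 :: "real^'p^'u" and L1 :: "real^'y^'q" and L2 :: "real^'y^'x"
    and P :: "real^('x + 'x)^('x + 'x)"
    and \<alpha>0 \<mu> \<omega>0 :: real
  assumes p_lip: "\<exists>Lp. Lp-lipschitz_on UNIV p"
    and p0: "p 0 = 0"
    and \<omega>0_pos: "\<omega>0 > 0"
    and \<alpha>0_pos: "\<alpha>0 > 0"
    and \<mu>_pos: "\<mu> > 0"
    and P_sym: "transpose P = P"
    and P_pos: "\<forall>z. z \<noteq> 0 \<longrightarrow> z \<bullet> (P *v z) > 0"
    and lyap: "\<forall>x xh. let u = ctrl_input K1 K2 Cq p xh;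
                          dx = plant_rhs A B E Ew Cq p x u 0;
                          dxh = obs_rhs A B C D Cq E p L1 L2 x xh u;
                          z = stack x (x - xh);
                          dz = stack dx (dx - dxh)
                      in dz \<bullet> (P *v z) + z \<bullet> (P *v dz) \<le> - \<alpha>0 * (z \<bullet> (P *v z))"
  shows "\<exists>\<tau>>0. \<exists>\<sigma>>0. \<exists>\<epsilon>>0. \<exists>\<beta>1 \<beta>2 d. class_KL \<beta>1 \<and> class_K \<beta>2 \<and> d \<ge> 0 \<and>
           (\<forall>x xh xs tk w. et_solution A B C D Cq E Ew p K1 K2 L1 L2 \<tau> \<sigma> \<epsilon> \<omega>0 x xh xs tk w \<longrightarrow>
              (\<forall>t\<ge>0. norm (stack (x t) (x t - xh t))
                 \<le> \<beta>1 (norm (stack (x 0) (x 0 - xh 0))) t + \<beta>2 (SUP s\<in>{0..}. norm (w s)) + d))"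
proof -
  obtain Lp where "Lp-lipschitz_on UNIV p" using p_lip by blast
  then obtain L where loop: "lipschitz_observer_loop (plant_rhs A B E Ew Cq p)
      (obs_rhs A B C D Cq E p L1 L2) (ctrl_input K1 K2 Cq p) L"
    using lipschitz_observer_loop_instance p0 by blast
  obtain \<tau> \<sigma> \<epsilon> \<beta>1 \<beta>2 d where params: "0 < \<tau>" "0 < \<sigma>" "0 < \<epsilon>" "class_KL \<beta>1" "class_K \<beta>2" "0 \<le> d"
    and bound: "\<forall>\<omega> x xh xs tk w. et_trajectory (plant_rhs A B E Ew Cq p) (obs_rhs A B C D Cq E p L1 L2)
      (ctrl_input K1 K2 Cq p) L \<tau> \<sigma> \<epsilon> \<omega> x xh xs tk w \<longrightarrow>
      (\<forall>t\<ge>0. norm (stack (x t) (x t - xh t)) \<le> \<beta>1 (norm (stack (x 0) (x 0 - xh 0))) t + \<beta>2 \<omega> + d)"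
    using lipschitz_observer_loop.event_triggered_ISpS[OF loop P_sym P_pos \<alpha>0_pos lyap]
    by (elim exE conjE) (rule that)
  have "\<forall>x xh xs tk w. et_solution A B C D Cq E Ew p K1 K2 L1 L2 \<tau> \<sigma> \<epsilon> \<omega>0 x xh xs tk w \<longrightarrow>
      (\<forall>t\<ge>0. norm (stack (x t) (x t - xh t))
        \<le> \<beta>1 (norm (stack (x 0) (x 0 - xh 0))) t + \<beta>2 (SUP s\<in>{0..}. norm (w s)) + d)"
    using bound et_solution_imp_et_trajectory[OF _ loop params(1)] by blast
  with params show ?thesis by blast
qed

end
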